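(* For $n\ge2$ and $u_1,\dots,u_n\in\mathcal B$, the Boolean cumulant satisfies $B_n[X(u_1),\dots,X(u_n)]=\sum_{\pi\in\widetilde{\mathrm{NC}}_{ns}(n)}\langle W_M(\pi)\Omega,\Omega\rangle_{\gamma,\phi}$, and for $n=1$ the Boolean cumulant $B_1[X(u_1)]$ is zero.
   Context: Let $\mathcal B$ be a unital $*$-algebra with star-linear maps $\phi:\mathcal B\to\mathbb C$, $\gamma:\mathcal B\to\mathcal B$, $\Lambda:\mathcal B\otimes_{alg}\mathcal B\to\mathcal B$, where $\phi$ is positive and faithful and $\gamma+\phi$ is completely positive, with $(\gamma+\phi)[b]:=\gamma[b]+\phi[b]1_{\mathcal B}$. Assume $\phi[v^*\Lambda(b\otimes u)]=\phi[\Lambda(b^*\otimes v)^*u]$ and $\gamma[v^*\Lambda(b\otimes u)]=\gamma[\Lambda(b^*\otimes v)^*u]$ for all $b,u,v$. On $\mathcal F_{alg}(\mathcal B)=\mathbb C\Omega\oplus\bigoplus_{n\ge1}\mathcal B^{\otimes n}$ use the form $\langle\Omega,\Omega\rangle_{\gamma,\phi}=1$, $\langle u_1\otimes\cdots\otimes u_n,v_1\otimes\cdots\otimes v_k\rangle_{\gamma,\phi}=\delta_{n=k}\phi[v_n^*(\gamma+\phi)[v_{n-1}^*\cdots(\gamma+\phi)[v_1^*u_1]\cdots u_{n-1}]u_n]$. For $b\in\mathcal B$: $a^+(b)\Omega=b$, $a^+(b)(u_1\otimes\cdots\otimes u_n)=b\otimes u_1\otimes\cdots\otimes u_n$; $a^-(b)\Omega=0$,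 $a^-(b)u_1=\phi[bu_1]\Omega$, $a^-(b)(u_1\otimes\cdots\otimes u_n)=(\gamma+\phi)[bu_1]u_2\otimes\cdots\otimes u_n$ ($n\ge2$); $a^0(b)\Omega=0$, $a^0(b)(u_1\otimes\cdots\otimes u_n)=\Lambda(b\otimes u_1)\otimes u_2\otimes\cdots\otimes u_n$; $X(b)=a^+(b)+a^-(b)+a^0(b)$. Boolean cumulants $B_k$ of operators $Y_1,\dots,Y_n$ with respect to the vacuum state $\psi(A)=\langle A\Omega,\Omega\rangle_{\gamma,\phi}$ are the multilinear functionals defined by $\psi[Y_1\cdots Y_n]=\sum_{\pi\in\mathrm{Int}(n)}\prod_{V\in\pi}B_{|V|}[Y_{V(1)},\dots,Y_{V(|V|)}]$, where $\mathrm{Int}(n)$ is the set of interval partitions of $\{1,\dots,n\}$. $\widetilde{\mathrm{NC}}_{ns}(n)$ is the set of noncrossing partitions of $\{1,\dots,n\}$ with no singleton blocks in which $1$ and $n$ lie in the same block. In a block the smallest element is opening, the largest closing, others middle; $W_M(\pi)=a_1(u_1)\cdots a_n(u_n)$ with $a_i=a^-$ (opening), $a^+$ (closing), $a^0$ (middle). *)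

theory Defs
  imports Complex_Main "HOL-Library.Disjoint_Sets"
begin

text \<open>The algebra B is a type 'b of class ring_1 (unital ring), together with a
complex scalar multiplication sc and an involution st.\<close>

definition star_algebra :: "(complex \<Rightarrow> 'b::ring_1 \<Rightarrow> 'b) \<Rightarrow> ('b \<Rightarrow> 'b) \<Rightarrow> bool" where
  "star_algebra sc st \<longleftrightarrow>
     (\<forall>a b x. sc (a + b) x = sc a x + sc b x) \<and>
     (\<forall>a x y. sc a (x + y) = sc a x + sc a y) \<and>
     (\<forall>a b x. sc (a * b) x = sc a (sc b x)) \<and>
     (\<forall>x. sc 1 x = x) \<and>
     (\<forall>a x y. sc a (x * y) = sc a x * y) \<and>
     (\<forall>a x y. sc a (x * y) = x * sc a y) \<and>
     (\<forall>x. st (st x) = x) \<and>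
     (\<forall>x y. st (x + y) = st x + st y) \<and>
     (\<forall>a x. st (sc a x) = sc (cnj a) (st x)) \<and>
     (\<forall>x y. st (x * y) = st y * st x)"

definition star_linear_functional ::
  "(complex \<Rightarrow> 'b::ring_1 \<Rightarrow> 'b) \<Rightarrow> ('b \<Rightarrow> 'b) \<Rightarrow> ('b \<Rightarrow> complex) \<Rightarrow> bool" where
  "star_linear_functional sc st f \<longleftrightarrow>
     (\<forall>x y. f (x + y) = f x + f y) \<and> (\<forall>a x. f (sc a x) = a * f x) \<and>
     (\<forall>x. f (st x) = cnj (f x))"

definition star_linear_map ::
  "(complex \<Rightarrow> 'b::ring_1 \<Rightarrow> 'b) \<Rightarrow> ('b \<Rightarrow> 'b) \<Rightarrow> ('b \<Rightarrow> 'b) \<Rightarrow> bool" where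
  "star_linear_map sc st f \<longleftrightarrow>
     (\<forall>x y. f (x + y) = f x + f y) \<and> (\<forall>a x. f (sc a x) = sc a (f x)) \<and>
     (\<forall>x. f (st x) = st (f x))"

text \<open>A linear map on the algebraic tensor product B \<otimes> B is the same as a bilinear
map B \<times> B \<rightarrow> B; it is star-linear for the involution (b \<otimes> u)* = b* \<otimes> u*.\<close>

definition star_bilinear_map ::
  "(complex \<Rightarrow> 'b::ring_1 \<Rightarrow> 'b) \<Rightarrow> ('b \<Rightarrow> 'b) \<Rightarrow> ('b \<Rightarrow> 'b \<Rightarrow> 'b) \<Rightarrow> bool" where
  "star_bilinear_map sc st L \<longleftrightarrow>
     (\<forall>x y u. L (x + y) u = L x u + L y u) \<and> (\<forall>a x u. L (sc a x) u = sc a (L x u)) \<and>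
     (\<forall>x u v. L x (u + v) = L x u + L x v) \<and> (\<forall>a x u. L x (sc a u) = sc a (L x u)) \<and>
     (\<forall>x u. L (st x) (st u) = st (L x u))"

definition positive_functional :: "('b::ring_1 \<Rightarrow> 'b) \<Rightarrow> ('b \<Rightarrow> complex) \<Rightarrow> bool" where
  "positive_functional st f \<longleftrightarrow> (\<forall>b. f (st b * b) \<in> \<real> \<and> Re (f (st b * b)) \<ge> 0)"

definition faithful_functional :: "('b::ring_1 \<Rightarrow> 'b) \<Rightarrow> ('b \<Rightarrow> complex) \<Rightarrow> bool" where
  "faithful_functional st f \<longleftrightarrow> (\<forall>b. f (st b * b) = 0 \<longrightarrow> b = 0)"

definition mat_pos :: "('b::ring_1 \<Rightarrow> 'b) \<Rightarrow> nat \<Rightarrow> (nat \<Rightarrow> nat \<Rightarrow> 'b) \<Rightarrow> bool" where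
  "mat_pos st n M \<longleftrightarrow> (\<exists>As :: (nat \<Rightarrow> nat \<Rightarrow> 'b) list.
      \<forall>i<n. \<forall>j<n. M i j = (\<Sum>A\<leftarrow>As. \<Sum>k<n. st (A k i) * A k j))"

definition completely_positive :: "('b::ring_1 \<Rightarrow> 'b) \<Rightarrow> ('b \<Rightarrow> 'b) \<Rightarrow> bool" where
  "completely_positive st T \<longleftrightarrow>
     (\<forall>n M. mat_pos st n M \<longrightarrow> mat_pos st n (\<lambda>i j. T (M i j)))"

definition gp :: "(complex \<Rightarrow> 'b::ring_1 \<Rightarrow> 'b) \<Rightarrow> ('b \<Rightarrow> 'b) \<Rightarrow> ('b \<Rightarrow> complex) \<Rightarrow> 'b \<Rightarrow> 'b" where
  "gp sc gam phi b = gam b + sc (phi b) 1"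

text \<open>A vector of F_alg(B) is represented as a formal finite linear combination of
elementary tensors u_1 \<otimes> ... \<otimes> u_n, encoded as words (lists); the empty word is \<Omega>.\<close>

type_synonym 'b fvec = "(complex \<times> 'b list) list"
type_synonym 'b fop = "'b list \<Rightarrow> 'b fvec"

definition vac :: "'b fvec" where "vac = [(1, [])]"

fun ip_aux :: "(complex \<Rightarrow> 'b::ring_1 \<Rightarrow> 'b) \<Rightarrow> ('b \<Rightarrow> 'b) \<Rightarrow> ('b \<Rightarrow> 'b) \<Rightarrow> ('b \<Rightarrow> complex)
      \<Rightarrow> 'b \<Rightarrow> 'b list \<Rightarrow> 'b list \<Rightarrow> complex" where
  "ip_aux sc st gam phi a (u # us) (v # vs) = ip_aux sc st gam phi (st v * gp sc gam phi a * u) us vs"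
| "ip_aux sc st gam phi a [] [] = phi a"
| "ip_aux sc st gam phi a _ _ = 0"

text \<open>Form on elementary tensors:
 <u_1..u_n, v_1..v_k> = delta_{n=k} phi[v_n* (g+phi)[v_{n-1}* ... (g+phi)[v_1* u_1] ... u_{n-1}] u_n]\<close>

fun ipw :: "(complex \<Rightarrow> 'b::ring_1 \<Rightarrow> 'b) \<Rightarrow> ('b \<Rightarrow> 'b) \<Rightarrow> ('b \<Rightarrow> 'b) \<Rightarrow> ('b \<Rightarrow> complex)
      \<Rightarrow> 'b list \<Rightarrow> 'b list \<Rightarrow> complex" where
  "ipw sc st gam phi [] [] = 1"
| "ipw sc st gam phi (u # us) (v # vs) = ip_aux sc st gam phi (st v * u) us vs"
| "ipw sc st gam phi _ _ = 0"

definition fock_ip :: "(complex \<Rightarrow> 'b::ring_1 \<Rightarrow> 'b) \<Rightarrow> ('b \<Rightarrow> 'b) \<Rightarrow> ('b \<Rightarrow> 'b) \<Rightarrow> ('b \<Rightarrow> complex)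
      \<Rightarrow> 'b fvec \<Rightarrow> 'b fvec \<Rightarrow> complex" where
  "fock_ip sc st gam phi v w =
     (\<Sum>p\<leftarrow>v. \<Sum>q\<leftarrow>w. fst p * cnj (fst q) * ipw sc st gam phi (snd p) (snd q))"

text \<open>An operator is given by its action on elementary tensors, extended linearly.\<close>

definition op_apply :: "'b fop \<Rightarrow> 'b fvec \<Rightarrow> 'b fvec" where
  "op_apply Y v = concat (map (\<lambda>p. map (\<lambda>q. (fst p * fst q, snd q)) (Y (snd p))) v)"

fun ops_apply :: "'b fop list \<Rightarrow> 'b fvec \<Rightarrow> 'b fvec" where
  "ops_apply [] v = v"
| "ops_apply (Y # Ys) v = op_apply Y (ops_apply Ys v)"

definition vacuum_state :: "(complex \<Rightarrow> 'b::ring_1 \<Rightarrow> 'b) \<Rightarrow> ('b \<Rightarrow> 'b) \<Rightarrow> ('b \<Rightarrow> 'b) \<Rightarrow> ('b \<Rightarrow> complex)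
      \<Rightarrow> 'b fop list \<Rightarrow> complex" where
  "vacuum_state sc st gam phi Ys = fock_ip sc st gam phi (ops_apply Ys vac) vac"

definition a_plus :: "'b \<Rightarrow> 'b fop" where
  "a_plus b w = [(1, b # w)]"

fun a_minus :: "(complex \<Rightarrow> 'b::ring_1 \<Rightarrow> 'b) \<Rightarrow> ('b \<Rightarrow> 'b) \<Rightarrow> ('b \<Rightarrow> complex) \<Rightarrow> 'b \<Rightarrow> 'b fop" where
  "a_minus sc gam phi b [] = []"
| "a_minus sc gam phi b [u] = [(phi (b * u), [])]"
| "a_minus sc gam phi b (u1 # u2 # us) = [(1, (gp sc gam phi (b * u1) * u2) # us)]"

fun a_zero :: "('b \<Rightarrow> 'b \<Rightarrow> 'b) \<Rightarrow> 'b \<Rightarrow> 'b fop" where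
  "a_zero L b [] = []"
| "a_zero L b (u # us) = [(1, L b u # us)]"

definition Xop :: "(complex \<Rightarrow> 'b::ring_1 \<Rightarrow> 'b) \<Rightarrow> ('b \<Rightarrow> 'b) \<Rightarrow> ('b \<Rightarrow> complex) \<Rightarrow> ('b \<Rightarrow> 'b \<Rightarrow> 'b)
      \<Rightarrow> 'b \<Rightarrow> 'b fop" where
  "Xop sc gam phi L b w = a_plus b w @ a_minus sc gam phi b w @ a_zero L b w"

definition interval_partitions :: "nat \<Rightarrow> nat set set set" where
  "interval_partitions n = {\<pi>. partition_on {1..n} \<pi> \<and> (\<forall>V\<in>\<pi>. \<exists>a b. V = {a..b})}"

definition noncrossing :: "nat set set \<Rightarrow> bool" where
  "noncrossing \<pi> \<longleftrightarrow> (\<forall>V\<in>\<pi>. \<forall>W\<in>\<pi>. V \<noteq> W \<longrightarrow>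
      \<not> (\<exists>a b c d. a < b \<and> b < c \<and> c < d \<and> a \<in> V \<and> c \<in> V \<and> b \<in> W \<and> d \<in> W))"

definition NC_ns_tilde :: "nat \<Rightarrow> nat set set set" where
  "NC_ns_tilde n = {\<pi>. partition_on {1..n} \<pi> \<and> noncrossing \<pi> \<and> (\<forall>V\<in>\<pi>. card V \<ge> 2) \<and>
                       (\<exists>V\<in>\<pi>. 1 \<in> V \<and> n \<in> V)}"

definition block_of :: "nat set set \<Rightarrow> nat \<Rightarrow> nat set" where
  "block_of \<pi> i = (THE V. V \<in> \<pi> \<and> i \<in> V)"

definition W_M :: "(complex \<Rightarrow> 'b::ring_1 \<Rightarrow> 'b) \<Rightarrow> ('b \<Rightarrow> 'b) \<Rightarrow> ('b \<Rightarrow> complex) \<Rightarrow> ('b \<Rightarrow> 'b \<Rightarrow> 'b)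
      \<Rightarrow> nat set set \<Rightarrow> 'b list \<Rightarrow> 'b fop list" where
  "W_M sc gam phi L \<pi> us = map (\<lambda>i. let V = block_of \<pi> i in
      if i = Min V then a_minus sc gam phi (us ! (i - 1))
      else if i = Max V then a_plus (us ! (i - 1))
      else a_zero L (us ! (i - 1))) [1..<length us + 1]"

text \<open>B is the family of Boolean cumulants of the state psi (on lists of operators,
representing their product): psi[Y_1...Y_n] = sum over interval partitions of products of
B over the blocks. This relation determines B uniquely.\<close>

definition is_boolean_cumulants :: "('y list \<Rightarrow> complex) \<Rightarrow> ('y list \<Rightarrow> complex) \<Rightarrow> bool" where
  "is_boolean_cumulants psi B \<longleftrightarrow> (\<forall>Ys. Ys \<noteq> [] \<longrightarrow>
     psi Ys = (\<Sum>\<pi>\<in>interval_partitions (length Ys).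
                 \<Prod>V\<in>\<pi>. B (map (\<lambda>i. Ys ! (i - 1)) (sorted_list_of_set V))))"

end

theory Submission
  imports Defs
begin

(*
  Expanding every X(u) = a^+(u) + a^-(u) + a^0(u) writes psi[X(u_1) ... X(u_n)] as a sum over
  words in the three letters.  Read from the right, a word maps the vacuum to a multiple of a
  single elementary tensor whose length is the current height (a^+ raises it, a^- lowers it);
  the word contributes only if no a^- or a^0 meets the vacuum and the height returns to zero, and
  splitting such a word at a return to height zero factorises its value.  Splitting at the first
  return is exactly the Boolean moment-cumulant recursion, with the irreducible words (those that
  return to zero only at the end) in the role of the cumulants; so B_n is the sum over irreducible
  words, and B_1 = 0 because no irreducible word has length one.  Finally, recording for every
  position whether it opens, closes or lies inside its block is a bijection from NC~_ns(n) onto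
  the irreducible words of length n, and it turns W_M(pi) into the corresponding word.
*)

section \<open>Words and their levels\<close>

datatype kind = Opening | Closing | Middle

lemma UNIV_kind: "(UNIV :: kind set) = {Opening, Closing, Middle}"
  using kind.exhaust by auto

instance kind :: finite
  by standard (simp add: UNIV_kind)

fun weight :: "kind \<Rightarrow> int" where
  "weight Opening = -1"
| "weight Closing = 1"
| "weight Middle = 0"

definition height :: "kind list \<Rightarrow> int" where
  "height ts = (\<Sum>t\<leftarrow>ts. weight t)"

lemma height_simps [simp]:
  "height [] = 0"
  "height (t # ts) = weight t + height ts"
  "height (ts @ ts') = height ts + height ts'"
  by (simp_all add: height_def)

fun admissible :: "kind list \<Rightarrow> bool" where
  "admissible [] = True"
| "admissible (t # ts) \<longleftrightarrow> admissible ts \<and> (t = Closing \<or> height ts > 0)"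

definition balanced :: "kind list \<Rightarrow> bool" where
  "balanced ts \<longleftrightarrow> admissible ts \<and> height ts = 0"

text \<open>A word is evaluated from the right, its last letter acting first on the vacuum.  So
  \<^term>\<open>level ts j\<close>, the height of the suffix after the first \<open>j\<close> letters, is the tensor
  length between the positions \<open>j\<close> and \<open>j + 1\<close> (counted from 1); for the word of a partition
  it is the number of blocks open there.\<close>

definition level :: "kind list \<Rightarrow> nat \<Rightarrow> int" where
  "level ts j = height (drop j ts)"

definition irreducible :: "kind list \<Rightarrow> bool" where
  "irreducible ts \<longleftrightarrow>
     balanced ts \<and> ts \<noteq> [] \<and> (\<forall>j. 0 < j \<and> j < length ts \<longrightarrow> level ts j \<noteq> 0)"

lemma admissible_appendD: "admissible (ts @ ts') \<Longrightarrow> admissible ts'"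
  by (induction ts) auto

lemma admissible_append:
  "height ts' = 0 \<Longrightarrow> admissible (ts @ ts') \<longleftrightarrow> admissible ts \<and> admissible ts'"
  by (induction ts) auto

lemma admissible_drop: "admissible ts \<Longrightarrow> admissible (drop j ts)"
  by (metis append_take_drop_id admissible_appendD)

lemma height_nonneg: "admissible ts \<Longrightarrow> 0 \<le> height ts"
proof (induction ts)
  case (Cons t ts)
  then show ?case
    by (cases t) auto
qed simp

lemma level_0 [simp]: "level ts 0 = height ts"
  by (simp add: level_def)

lemma level_length [simp]: "level ts (length ts) = 0"
  by (simp add: level_def)

lemma level_Suc: "j < length ts \<Longrightarrow> level ts j = weight (ts ! j) + level ts (Suc j)"
  by (simp add: level_def Cons_nth_drop_Suc[symmetric])

lemma weight_cases: "weight t = -1 \<and> t = Opening \<or> weight t = 0 \<and> t = Middle \<or> weight t = 1 \<and> t = Closing"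
  by (cases t) auto

lemma level_pred:
  "1 \<le> q \<Longrightarrow> q \<le> length ts \<Longrightarrow> level ts (q - 1) = weight (ts ! (q - 1)) + level ts q"
  using level_Suc[of "q - 1" ts] by simp

lemma admissible_iff_level:
  "admissible ts \<longleftrightarrow> (\<forall>j<length ts. ts ! j \<noteq> Closing \<longrightarrow> level ts (Suc j) > 0)"
  by (induction ts) (auto simp: level_def All_less_Suc2)

lemma balanced_level_pos:
  "balanced ts \<Longrightarrow> j < length ts \<Longrightarrow> ts ! j \<noteq> Closing \<Longrightarrow> 0 < level ts (Suc j)"
  by (simp add: balanced_def admissible_iff_level)

lemma balanced_level_nonneg: "balanced ts \<Longrightarrow> 0 \<le> level ts j"
  by (simp add: balanced_def level_def admissible_drop height_nonneg)

lemma balanced_append: "balanced ts \<Longrightarrow> balanced ts' \<Longrightarrow> balanced (ts @ ts')"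
  by (simp add: balanced_def admissible_append)

lemma irreducible_level_pos: "irreducible ts \<Longrightarrow> 0 < j \<Longrightarrow> j < length ts \<Longrightarrow> 0 < level ts j"
  using balanced_level_nonneg[of ts j] by (force simp: irreducible_def)

lemma irreducible_length: "irreducible ts \<Longrightarrow> 2 \<le> length ts"
proof (rule ccontr)
  assume irr: "irreducible ts" and "\<not> 2 \<le> length ts"
  then have len: "length ts = 1"
    by (cases ts) (auto simp: irreducible_def)
  have level_1: "level ts 1 = 0"
    using level_length[of ts] len by simp
  moreover have "0 = weight (ts ! 0) + level ts 1"
    using level_Suc[of 0 ts] len irr by (simp add: irreducible_def balanced_def)
  ultimately have "ts ! 0 = Middle"
    using weight_cases[of "ts ! 0"] by auto
  then have "0 < level ts 1"
    using balanced_level_pos[of ts 0] irr len by (simp add: irreducible_def)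
  then show False
    using level_1 by simp
qed

definition first_return :: "kind list \<Rightarrow> nat" where
  "first_return ts = (LEAST j. 0 < j \<and> level ts j = 0)"

lemma first_return_spec:
  assumes "balanced ts" "ts \<noteq> []"
  shows "0 < first_return ts" "first_return ts \<le> length ts" "level ts (first_return ts) = 0"
    and "\<And>j. 0 < j \<Longrightarrow> j < first_return ts \<Longrightarrow> level ts j \<noteq> 0"
proof -
  have ex: "0 < length ts \<and> level ts (length ts) = 0"
    using assms by simp
  show "0 < first_return ts" "level ts (first_return ts) = 0"
    using LeastI[of "\<lambda>j. 0 < j \<and> level ts j = 0", OF ex] by (auto simp: first_return_def)
  show "first_return ts \<le> length ts"
    using Least_le[of "\<lambda>j. 0 < j \<and> level ts j = 0", OF ex] by (simp add: first_return_def)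
  show "\<And>j. 0 < j \<Longrightarrow> j < first_return ts \<Longrightarrow> level ts j \<noteq> 0"
    using not_less_Least[of _ "\<lambda>j. 0 < j \<and> level ts j = 0"] by (auto simp: first_return_def)
qed

lemma level_append: "j \<le> length ts \<Longrightarrow> level (ts @ ts') j = level ts j + height ts'"
  by (simp add: level_def)

lemma first_return_split:
  assumes "balanced ts" "ts \<noteq> []"
  shows "irreducible (take (first_return ts) ts)" "balanced (drop (first_return ts) ts)"
proof -
  let ?k = "first_return ts"
  note k = first_return_spec[OF assms]
  have height_drop: "height (drop ?k ts) = 0"
    using k(3) by (simp add: level_def)
  have adm: "admissible (take ?k ts) \<and> admissible (drop ?k ts)"
    using assms(1) height_drop admissible_append[of "drop ?k ts" "take ?k ts"]
    by (simp add: balanced_def)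
  have height_take: "height (take ?k ts) = 0"
    using assms(1) height_drop height_simps(3)[of "take ?k ts" "drop ?k ts"] by (simp add: balanced_def)
  show "balanced (drop ?k ts)"
    using adm height_drop by (simp add: balanced_def)
  have "level (take ?k ts) j \<noteq> 0" if "0 < j" "j < length (take ?k ts)" for j
  proof -
    have "j < ?k"
      using that(2) by simp
    moreover have "level (take ?k ts) j = level ts j"
      using level_append[of j "take ?k ts" "drop ?k ts"] that(2) height_drop by simp
    ultimately show ?thesis
      using k(4)[OF that(1)] by simp
  qed
  then show "irreducible (take ?k ts)"
    using adm height_take k(1) assms(2) by (auto simp: irreducible_def balanced_def)
qed

lemma first_return_append:
  assumes "irreducible ts" "balanced ts'"
  shows "first_return (ts @ ts') = length ts"
  unfolding first_return_def
proof (rule Least_equality)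
  have "height ts' = 0"
    using assms(2) by (simp add: balanced_def)
  then have levels: "level (ts @ ts') j = level ts j" if "j \<le> length ts" for j
    using that by (simp add: level_append)
  then show "0 < length ts \<and> level (ts @ ts') (length ts) = 0"
    using assms(1) by (simp add: irreducible_def)
  show "length ts \<le> j" if "0 < j \<and> level (ts @ ts') j = 0" for j
    using that levels[of j] assms(1) by (force simp: irreducible_def)
qed

definition balanced_words :: "nat \<Rightarrow> kind list set" where
  "balanced_words n = {ts. length ts = n \<and> balanced ts}"

definition irreducible_words :: "nat \<Rightarrow> kind list set" where
  "irreducible_words n = {ts. length ts = n \<and> irreducible ts}"

lemma finite_balanced_words: "finite (balanced_words n)"
  by (rule finite_subset[OF _ finite_list_length[of n]]) (auto simp: balanced_words_def)

lemma finite_irreducible_words: "finite (irreducible_words n)"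
  by (rule finite_subset[OF _ finite_list_length[of n]]) (auto simp: irreducible_words_def)

lemma sum_balanced_words_first_return:
  assumes "1 \<le> n"
  shows "(\<Sum>ts\<in>balanced_words n. f ts) =
    (\<Sum>k=1..n. \<Sum>ts\<in>irreducible_words k. \<Sum>ts'\<in>balanced_words (n - k). f (ts @ ts'))"
proof -
  let ?T = "SIGMA k:{1..n}. irreducible_words k \<times> balanced_words (n - k)"
  let ?i = "\<lambda>(k, ts, ts'). ts @ ts'"
  let ?j = "\<lambda>ts. (first_return ts, take (first_return ts) ts, drop (first_return ts) ts)"
  have "(\<Sum>ts\<in>balanced_words n. f ts) = (\<Sum>(k, ts, ts')\<in>?T. f (ts @ ts'))"
  proof (rule sum.reindex_bij_witness[where i = ?i and j = ?j])
    fix ts assume "ts \<in> balanced_words n"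
    then have ts: "balanced ts" "ts \<noteq> []" "length ts = n"
      using assms by (auto simp: balanced_words_def)
    show "?j ts \<in> ?T"
      using first_return_spec[OF ts(1,2)] first_return_split[OF ts(1,2)] ts(3)
      by (auto simp: balanced_words_def irreducible_words_def min_def)
  next
    fix b assume "b \<in> ?T"
    then obtain k ts ts' where b: "b = (k, ts, ts')" "k \<in> {1..n}"
      "ts \<in> irreducible_words k" "ts' \<in> balanced_words (n - k)"
      by auto
    then have "first_return (ts @ ts') = k"
      using first_return_append by (auto simp: irreducible_words_def balanced_words_def)
    then show "?j (?i b) = b"
      using b by (auto simp: irreducible_words_def)
    show "?i b \<in> balanced_words n"
      using b by (auto simp: irreducible_words_def balanced_words_def irreducible_def
          intro: balanced_append)
  qed auto
  also have "\<dots> = (\<Sum>k=1..n. \<Sum>p\<in>irreducible_words k \<times> balanced_words (n - k). f (fst p @ snd p))"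
    by (subst sum.Sigma) (auto simp: finite_irreducible_words finite_balanced_words split_def)
  also have "\<dots> = (\<Sum>k=1..n. \<Sum>ts\<in>irreducible_words k. \<Sum>ts'\<in>balanced_words (n - k). f (ts @ ts'))"
    by (simp add: sum.cartesian_product split_def)
  finally show ?thesis .
qed

section \<open>Boolean cumulants and interval partitions\<close>

definition subword :: "'y list \<Rightarrow> nat set \<Rightarrow> 'y list" where
  "subword Ys V = map (\<lambda>i. Ys ! (i - 1)) (sorted_list_of_set V)"

definition boolean_moment :: "('y list \<Rightarrow> complex) \<Rightarrow> 'y list \<Rightarrow> complex" where
  "boolean_moment B Ys = (\<Sum>\<pi>\<in>interval_partitions (length Ys). \<Prod>V\<in>\<pi>. B (subword Ys V))"

lemma is_boolean_cumulants_iff: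
  "is_boolean_cumulants psi B \<longleftrightarrow> (\<forall>Ys. Ys \<noteq> [] \<longrightarrow> psi Ys = boolean_moment B Ys)"
  by (simp add: is_boolean_cumulants_def boolean_moment_def subword_def)

lemma interval_partitions_0: "interval_partitions 0 = {{}}"
  by (auto simp: interval_partitions_def partition_on_empty)

lemma boolean_moment_Nil [simp]: "boolean_moment B [] = 1"
  by (simp add: boolean_moment_def interval_partitions_0)

lemma finite_interval_partitions: "finite (interval_partitions n)"
  by (rule finite_subset[OF _ finitely_many_partition_on[of "{1..n}"]])
    (auto simp: interval_partitions_def)

lemma sorted_list_of_set_shift:
  "finite V \<Longrightarrow> sorted_list_of_set ((+) k ` V) = map ((+) k) (sorted_list_of_set (V :: nat set))"
proof -
  assume "finite V"
  then have "sorted (map ((+) k) (sorted_list_of_set V))"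
    and "distinct (map ((+) k) (sorted_list_of_set V))"
    and "set (map ((+) k) (sorted_list_of_set V)) = (+) k ` V"
    by (simp_all add: sorted_map distinct_map)
  then show ?thesis
    by (metis sorted_list_of_set.idem_if_sorted_distinct)
qed

lemma subword_atLeastAtMost: "k \<le> length Ys \<Longrightarrow> subword Ys {1..k} = take k Ys"
proof -
  assume k: "k \<le> length Ys"
  have "sorted_list_of_set {1..k} = [1..<Suc k]"
    by (simp add: atLeastLessThanSuc_atLeastAtMost[symmetric])
  then show ?thesis
    using k by (auto intro!: nth_equalityI simp: subword_def simp del: upt_Suc)
qed

lemma subword_shift:
  assumes "V \<subseteq> {1..length Ys - k}"
  shows "subword Ys ((+) k ` V) = subword (drop k Ys) V"
proof -
  have "finite V"
    using assms finite_subset by blast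
  moreover have "Ys ! (k + i - 1) = drop k Ys ! (i - 1)" if "i \<in> V" for i
  proof -
    have "1 \<le> i" "i \<le> length Ys - k"
      using that assms by auto
    then show ?thesis
      by (simp add: nth_drop)
  qed
  ultimately show ?thesis
    by (simp add: subword_def sorted_list_of_set_shift)
qed

definition cons_block :: "nat \<Rightarrow> nat set set \<Rightarrow> nat set set" where
  "cons_block k s = insert {1..k} ((`) ((+) k) ` s)"

lemma cons_block_interval_partition:
  assumes k: "1 \<le> k" and s: "s \<in> interval_partitions m"
  shows "cons_block k s \<in> interval_partitions (k + m)"
proof -
  have s_part: "partition_on {1..m} s" and s_int: "\<forall>V\<in>s. \<exists>a b. V = {a..b}"
    using s by (auto simp: interval_partitions_def)
  have "partition_on ((+) k ` {1..m}) ((`) ((+) k) ` s - {{}})"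
    by (rule partition_on_inj_image[OF s_part]) simp
  moreover have "(`) ((+) k) ` s - {{}} = (`) ((+) k) ` s"
    using partition_onD3[OF s_part] by auto
  moreover have "(+) k ` {1..m} = {1..k + m} - {1..k}"
    by auto
  ultimately have shifted: "partition_on ({1..k + m} - {1..k}) ((`) ((+) k) ` s)"
    by simp
  have "disjnt {1..k} (\<Union> ((`) ((+) k) ` s))"
    using partition_onD1[OF shifted] by (auto simp: disjnt_def)
  from partition_on_insert[OF this] have "partition_on {1..k + m} (cons_block k s)"
    unfolding cons_block_def using shifted k by auto
  moreover have "\<exists>a b. W = {a..b}" if W: "W \<in> cons_block k s" for W
  proof -
    consider "W = {1..k}" | V where "V \<in> s" "W = (+) k ` V"
      using W unfolding cons_block_def by blast
    then show ?thesis
    proof cases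
      case 2
      then obtain a b where "V = {a..b}"
        using s_int by blast
      with 2 show ?thesis
        by auto
    qed auto
  qed
  ultimately show ?thesis
    by (simp add: interval_partitions_def)
qed

lemma interval_partition_first_block:
  assumes "\<pi> \<in> interval_partitions n" "1 \<le> n"
  shows "\<exists>k\<in>{1..n}. {1..k} \<in> \<pi>"
proof -
  have part: "partition_on {1..n} \<pi>" and int: "\<forall>V\<in>\<pi>. \<exists>a b. V = {a..b}"
    using assms(1) by (auto simp: interval_partitions_def)
  have "1 \<in> \<Union> \<pi>"
    using partition_onD1[OF part] assms(2) by (metis atLeastAtMost_iff order_refl)
  then obtain V where V: "V \<in> \<pi>" "1 \<in> V"
    by blast
  moreover obtain a b where "V = {a..b}"
    using int V by blast
  moreover have "V \<subseteq> {1..n}"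
    using partition_onD1[OF part] V by auto
  ultimately show ?thesis
    by (intro bexI[of _ b]) auto
qed

lemma vimage_shift_interval_partition:
  assumes R: "partition_on ({1..n} - {1..k}) R" and int: "\<forall>V\<in>R. \<exists>a b. V = {a..b}"
  shows "(-`) ((+) k) ` R \<in> interval_partitions (n - k)" and "(`) ((+) k) ` (-`) ((+) k) ` R = R"
proof -
  have R_sub: "V \<subseteq> {k<..n}" "V \<noteq> {}" if "V \<in> R" for V
  proof -
    have "V \<subseteq> {1..n} - {1..k}"
      using partition_onD1[OF R] that by blast
    then show "V \<subseteq> {k<..n}"
      by auto
    show "V \<noteq> {}"
      using partition_onD3[OF R] that by blast
  qed
  have "partition_on ((+) k -` ({1..n} - {1..k})) ((-`) ((+) k) ` R - {{}})"
    by (rule partition_on_vimage[OF R])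
  moreover have "(+) k -` ({1..n} - {1..k}) = {1..n - k}"
    by auto
  moreover have "(+) k -` V \<noteq> {}" if V: "V \<in> R" for V
  proof -
    obtain x where "x \<in> V"
      using R_sub(2)[OF V] by blast
    moreover have "k + (x - k) = x"
      using R_sub(1)[OF V] \<open>x \<in> V\<close> by auto
    ultimately show ?thesis
      by (metis empty_iff vimageI2)
  qed
  then have "(-`) ((+) k) ` R - {{}} = (-`) ((+) k) ` R"
    by blast
  ultimately have "partition_on {1..n - k} ((-`) ((+) k) ` R)"
    by simp
  moreover have "\<exists>a b. W = {a..b}" if W: "W \<in> (-`) ((+) k) ` R" for W
  proof -
    obtain V where V: "V \<in> R" "W = (+) k -` V"
      using W by blast
    moreover obtain a b where "V = {a..b}"
      using int V(1) by blast
    ultimately have "W = {a - k..b - k}"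
      using R_sub by fastforce
    then show ?thesis
      by blast
  qed
  ultimately show "(-`) ((+) k) ` R \<in> interval_partitions (n - k)"
    by (simp add: interval_partitions_def)
  have "(+) k ` ((+) k -` V) = V" if "V \<in> R" for V
    using R_sub[OF that] by (force simp: image_vimage_eq subset_iff dest: less_imp_add_positive)
  then show "(`) ((+) k) ` (-`) ((+) k) ` R = R"
    by (force simp: image_image)
qed

lemma interval_partition_eq_cons_block:
  assumes \<pi>: "\<pi> \<in> interval_partitions n" and k: "{1..k} \<in> \<pi>"
  shows "\<exists>s\<in>interval_partitions (n - k). \<pi> = cons_block k s"
proof -
  have part: "partition_on {1..n} \<pi>" and int: "\<forall>V\<in>\<pi> - {{1..k}}. \<exists>a b. V = {a..b}"
    using \<pi> by (auto simp: interval_partitions_def)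
  have "disjnt {1..k} (\<Union> (\<pi> - {{1..k}}))"
    using part k by (auto simp: partition_on_def disjoint_def disjnt_def)
  then have "partition_on ({1..n} - {1..k}) (\<pi> - {{1..k}})"
    using partition_on_insert[of "{1..k}" "\<pi> - {{1..k}}" "{1..n}"] part insert_Diff[OF k] by simp
  note shifted = vimage_shift_interval_partition[OF this int]
  have "\<pi> = cons_block k ((-`) ((+) k) ` (\<pi> - {{1..k}}))"
    using shifted(2) k by (auto simp: cons_block_def)
  with shifted(1) show ?thesis
    by blast
qed

lemma interval_partition_block_subset:
  "\<pi> \<in> interval_partitions n \<Longrightarrow> V \<in> \<pi> \<Longrightarrow> V \<subseteq> {1..n}"
  unfolding interval_partitions_def using partition_onD1 by fastforce

lemma interval_notin_shifted:
  assumes "1 \<le> j" "1 \<le> k" "s \<in> interval_partitions m"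
  shows "{1..j} \<notin> (`) ((+) k) ` s"
proof
  assume "{1..j} \<in> (`) ((+) k) ` s"
  then obtain V where V: "V \<in> s" "{1..j} = (+) k ` V"
    by blast
  have "1 \<in> (+) k ` V"
    using assms(1) unfolding V(2)[symmetric] by simp
  then obtain x where "x \<in> V" "1 = k + x"
    by blast
  moreover have "1 \<le> x"
    using interval_partition_block_subset[OF assms(3) V(1)] \<open>x \<in> V\<close> by auto
  ultimately show False
    using assms(2) by simp
qed

lemma cons_block_inj:
  assumes k: "1 \<le> k" "1 \<le> k'" and s: "s \<in> interval_partitions m" "s' \<in> interval_partitions m'"
    and eq: "cons_block k s = cons_block k' s'"
  shows "k = k' \<and> s = s'"
proof -
  have "{1..k} \<in> insert {1..k'} ((`) ((+) k') ` s')"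
    using eq unfolding cons_block_def by blast
  then have "{1..k} = {1..k'}"
    using interval_notin_shifted[OF k s(2)] by blast
  then have "k \<in> {1..k'}" "k' \<in> {1..k}"
    using k by auto
  then have kk: "k = k'"
    by simp
  then have "(`) ((+) k) ` s = (`) ((+) k) ` s'"
    using eq interval_notin_shifted[OF k(1) k(1) s(1)] interval_notin_shifted[OF k(1) k(1) s(2)]
    by (simp add: cons_block_def insert_ident)
  then have "s = s'"
    using inj_image_eq_iff[OF inj_on_image[of "(+) k" UNIV]] by simp
  with kk show ?thesis
    by simp
qed

lemma prod_cons_block:
  assumes k: "1 \<le> k" "k \<le> length Ys" and s: "s \<in> interval_partitions (length Ys - k)"
  shows "(\<Prod>V\<in>cons_block k s. B (subword Ys V)) =
    B (take k Ys) * (\<Prod>V\<in>s. B (subword (drop k Ys) V))"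
proof -
  have "finite s"
    using s finite_elements[of "{1..length Ys - k}" s] by (simp add: interval_partitions_def)
  moreover have "{1..k} \<notin> (`) ((+) k) ` s"
    using interval_notin_shifted[OF k(1) k(1) s] .
  ultimately have "(\<Prod>V\<in>cons_block k s. B (subword Ys V)) =
      B (subword Ys {1..k}) * (\<Prod>V\<in>s. B (subword Ys ((+) k ` V)))"
    by (simp add: cons_block_def prod.reindex inj_on_image)
  also have "\<dots> = B (take k Ys) * (\<Prod>V\<in>s. B (subword (drop k Ys) V))"
    using subword_atLeastAtMost[OF k(2)] interval_partition_block_subset[OF s]
    by (simp add: subword_shift)
  finally show ?thesis .
qed

lemma bij_betw_cons_block:
  assumes "1 \<le> n"
  shows "bij_betw (\<lambda>(k, s). cons_block k s) (SIGMA k:{1..n}. interval_partitions (n - k))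
    (interval_partitions n)"
proof (rule bij_betw_imageI)
  let ?T = "SIGMA k:{1..n}. interval_partitions (n - k)"
  show "inj_on (\<lambda>(k, s). cons_block k s) ?T"
  proof (rule inj_onI)
    fix p q assume "p \<in> ?T" "q \<in> ?T" and eq: "(\<lambda>(k, s). cons_block k s) p = (\<lambda>(k, s). cons_block k s) q"
    then obtain k s k' s' where "p = (k, s)" "k \<in> {1..n}" "s \<in> interval_partitions (n - k)"
      "q = (k', s')" "k' \<in> {1..n}" "s' \<in> interval_partitions (n - k')"
      by blast
    with eq show "p = q"
      using cons_block_inj[of k k' s _ s'] by simp
  qed
  show "(\<lambda>(k, s). cons_block k s) ` ?T = interval_partitions n"
  proof
    show "(\<lambda>(k, s). cons_block k s) ` ?T \<subseteq> interval_partitions n"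
      using cons_block_interval_partition by (force simp: image_iff)
    show "interval_partitions n \<subseteq> (\<lambda>(k, s). cons_block k s) ` ?T"
    proof
      fix \<pi> assume \<pi>: "\<pi> \<in> interval_partitions n"
      then obtain k where k: "k \<in> {1..n}" "{1..k} \<in> \<pi>"
        using interval_partition_first_block assms by blast
      then obtain s where "s \<in> interval_partitions (n - k)" "\<pi> = cons_block k s"
        using interval_partition_eq_cons_block[OF \<pi> k(2)] by auto
      with k show "\<pi> \<in> (\<lambda>(k, s). cons_block k s) ` ?T"
        by (intro image_eqI[of _ _ "(k, s)"]) auto
    qed
  qed
qed

lemma boolean_moment_recursion:
  assumes "Ys \<noteq> []"
  shows "boolean_moment B Ys = (\<Sum>k=1..length Ys. B (take k Ys) * boolean_moment B (drop k Ys))"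
proof -
  let ?n = "length Ys"
  have "1 \<le> ?n"
    using assms by (simp add: Suc_le_eq)
  then have "boolean_moment B Ys =
      (\<Sum>(k, s)\<in>(SIGMA k:{1..?n}. interval_partitions (?n - k)). \<Prod>V\<in>cons_block k s. B (subword Ys V))"
    using sum.reindex_bij_betw[OF bij_betw_cons_block, of ?n "\<lambda>\<pi>. \<Prod>V\<in>\<pi>. B (subword Ys V)"]
    by (simp add: boolean_moment_def split_def)
  also have "\<dots> = (\<Sum>k=1..?n. \<Sum>s\<in>interval_partitions (?n - k).
      B (take k Ys) * (\<Prod>V\<in>s. B (subword (drop k Ys) V)))"
    by (simp add: sum.Sigma[symmetric] finite_interval_partitions prod_cons_block)
  also have "\<dots> = (\<Sum>k=1..?n. B (take k Ys) * boolean_moment B (drop k Ys))"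
    by (simp add: boolean_moment_def sum_distrib_left)
  finally show ?thesis .
qed

lemma boolean_cumulants_unique:
  fixes M B C :: "'a list \<Rightarrow> complex"
  assumes "\<And>xs. xs \<noteq> [] \<Longrightarrow> M xs = (\<Sum>k=1..length xs. B (take k xs) * M (drop k xs))"
    and "\<And>xs. xs \<noteq> [] \<Longrightarrow> M xs = (\<Sum>k=1..length xs. C (take k xs) * M (drop k xs))"
    and "M [] = 1"
  shows "xs \<noteq> [] \<Longrightarrow> B xs = C xs"
proof (induction xs rule: length_induct)
  case (1 xs)
  let ?n = "length xs"
  have split: "{1..?n} = insert ?n {1..<?n}"
    using "1.prems" by (auto simp: Suc_le_eq)
  have "B (take k xs) = C (take k xs)" if "k \<in> {1..<?n}" for k
    using "1.IH"[rule_format, of "take k xs"] "1.prems" that by auto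
  then have "(\<Sum>k\<in>{1..<?n}. B (take k xs) * M (drop k xs)) = (\<Sum>k\<in>{1..<?n}. C (take k xs) * M (drop k xs))"
    by simp
  moreover have "M xs = B xs * M [] + (\<Sum>k=1..<?n. B (take k xs) * M (drop k xs))"
    using assms(1)[OF "1.prems"] unfolding split by simp
  moreover have "M xs = C xs * M [] + (\<Sum>k=1..<?n. C (take k xs) * M (drop k xs))"
    using assms(2)[OF "1.prems"] unfolding split by simp
  ultimately show ?case
    using assms(3) by simp
qed

section \<open>Noncrossing partitions and irreducible words\<close>

text \<open>\<^term>\<open>opens ts q i\<close>: in the partition encoded by \<open>ts\<close>, position \<open>q\<close> opens the
  block of position \<open>i\<close>.  Positions are 1-based, so the letter at \<open>q\<close> is
  \<^term>\<open>ts ! (q - 1)\<close>.\<close>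

definition opens :: "kind list \<Rightarrow> nat \<Rightarrow> nat \<Rightarrow> bool" where
  "opens ts q i \<longleftrightarrow> 1 \<le> q \<and> q \<le> i \<and> i \<le> length ts \<and> ts ! (q - 1) = Opening \<and>
     (\<forall>m. q \<le> m \<and> m < i \<longrightarrow> level ts q \<le> level ts m) \<and>
     (q = i \<or> ts ! (i - 1) \<noteq> Opening \<and> level ts (i - 1) = level ts q)"

lemma opens_unique: "opens ts q i \<Longrightarrow> opens ts q' i \<Longrightarrow> q = q'"
proof (induction q q' rule: linorder_wlog)
  case (le q q')
  show ?case
  proof (rule ccontr)
    assume "q \<noteq> q'"
    with le have "q < q'" "q' \<le> i" "q' \<noteq> i" "ts ! (i - 1) \<noteq> Opening" "level ts (i - 1) = level ts q"
      by (auto simp: opens_def)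
    moreover have "level ts (q' - 1) = level ts q' - 1" "level ts (i - 1) = level ts q'"
      using le.prems(2) level_pred[of q' ts] \<open>q' \<noteq> i\<close> by (auto simp: opens_def)
    moreover have "q \<le> q' - 1" "q' - 1 < i"
      using \<open>q < q'\<close> \<open>q' \<le> i\<close> by auto
    then have "level ts q \<le> level ts (q' - 1)"
      using le.prems(1) unfolding opens_def by blast
    ultimately show False
      by simp
  qed
qed (simp add: eq_commute)

definition opener :: "kind list \<Rightarrow> nat \<Rightarrow> nat" where
  "opener ts i = (THE q. opens ts q i)"

lemma opener_eq: "opens ts q i \<Longrightarrow> opener ts i = q"
  unfolding opener_def using opens_unique by blast

lemma opens_self: "opens ts q i \<Longrightarrow> opens ts q q"
  by (auto simp: opens_def)

lemma opener_self: "opens ts q i \<Longrightarrow> opener ts q = q"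
  using opener_eq opens_self by blast

lemma irreducible_opens_first_last:
  assumes irr: "irreducible ts"
  shows "opens ts 1 (length ts)"
proof -
  let ?n = "length ts"
  have n: "2 \<le> ?n"
    using irreducible_length[OF irr] .
  have "0 = weight (ts ! 0) + level ts 1" "0 < level ts 1"
    using level_Suc[of 0 ts] irreducible_level_pos[OF irr, of 1] irr n
    by (simp_all add: irreducible_def balanced_def)
  then have first: "ts ! 0 = Opening" "level ts 1 = 1"
    using weight_cases[of "ts ! 0"] by auto
  have "level ts (?n - 1) = weight (ts ! (?n - 1))" "0 < level ts (?n - 1)"
    using level_pred[of ?n ts] irreducible_level_pos[OF irr, of "?n - 1"] n by simp_all
  then have last: "ts ! (?n - 1) = Closing" "level ts (?n - 1) = 1"
    using weight_cases[of "ts ! (?n - 1)"] by auto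
  have "1 \<le> level ts m" if "1 \<le> m" "m < ?n" for m
    using irreducible_level_pos[OF irr, of m] that by simp
  then show ?thesis
    using first last n by (auto simp: opens_def)
qed

lemma opens_noncrossing:
  assumes opens: "opens ts q a" "opens ts q c" "opens ts q' b" "opens ts q' d"
    and abcd: "a < b" "b < c" "c < d"
  shows "q = q'"
proof (rule ccontr)
  assume "q \<noteq> q'"
  have q: "1 \<le> q" "q \<le> a" "ts ! (q - 1) = Opening" "q \<le> length ts"
    and q': "1 \<le> q'" "q' \<le> b" "ts ! (q' - 1) = Opening" "q' \<le> length ts"
    using opens(1,3) by (auto simp: opens_def)
  then have level_q: "level ts (q - 1) = level ts q - 1"
    and level_q': "level ts (q' - 1) = level ts q' - 1"
    using level_pred by simp_all
  have c_mono: "level ts q \<le> level ts m" if "q \<le> m" "m < c" for m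
    using opens(2) that unfolding opens_def by blast
  have c_last: "level ts (c - 1) = level ts q"
    using opens(2) q abcd unfolding opens_def by auto
  have d_mono: "level ts q' \<le> level ts m" if "q' \<le> m" "m < d" for m
    using opens(4) that unfolding opens_def by blast
  show False
  proof (cases "q' < q")
    case True
    have "level ts (b - 1) = level ts q'"
      using opens(3) True q abcd unfolding opens_def by auto
    moreover have "level ts q \<le> level ts (b - 1)"
      using c_mono q abcd by simp
    moreover have "level ts q' \<le> level ts (q - 1)"
      using d_mono True abcd q by simp
    ultimately show False
      using level_q by simp
  next
    case False
    then have "q < q'"
      using \<open>q \<noteq> q'\<close> by simp
    then have "level ts q \<le> level ts (q' - 1)"
      using c_mono q' abcd by simp
    moreover have "level ts q' \<le> level ts (c - 1)"
      using d_mono q' abcd by simp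
    ultimately show False
      using level_q' c_last by simp
  qed
qed

definition word_partition :: "nat \<Rightarrow> kind list \<Rightarrow> nat set set" where
  "word_partition n ts = (\<lambda>i. {k\<in>{1..n}. opener ts k = opener ts i}) ` {1..n}"

definition kind_at :: "nat set set \<Rightarrow> nat \<Rightarrow> kind" where
  "kind_at \<pi> i = (let V = block_of \<pi> i in
     if i = Min V then Opening else if i = Max V then Closing else Middle)"

definition kind_word :: "nat set set \<Rightarrow> nat \<Rightarrow> kind list" where
  "kind_word \<pi> n = map (kind_at \<pi>) [1..<n + 1]"

lemma length_kind_word [simp]: "length (kind_word \<pi> n) = n"
  by (simp add: kind_word_def)

lemma kind_word_nth: "j < n \<Longrightarrow> kind_word \<pi> n ! j = kind_at \<pi> (Suc j)"
  by (simp add: kind_word_def del: upt_Suc)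

locale nc_partition =
  fixes n :: nat and \<pi> :: "nat set set"
  assumes partition: "partition_on {1..n} \<pi>" and noncrossing: "noncrossing \<pi>"
    and no_singletons: "\<forall>V\<in>\<pi>. 2 \<le> card V"
begin

lemma block_subset: "V \<in> \<pi> \<Longrightarrow> V \<subseteq> {1..n}"
  using partition_onD1[OF partition] Union_upper by metis

lemma block_finite: "V \<in> \<pi> \<Longrightarrow> finite V"
  using block_subset finite_subset by blast

lemma block_nonempty: "V \<in> \<pi> \<Longrightarrow> V \<noteq> {}"
  using partition_onD3[OF partition] by blast

lemma block_eq: "V \<in> \<pi> \<Longrightarrow> W \<in> \<pi> \<Longrightarrow> x \<in> V \<Longrightarrow> x \<in> W \<Longrightarrow> V = W"
  using partition_onD2[OF partition] by (auto simp: disjoint_def)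

lemma block_of_eq: "V \<in> \<pi> \<Longrightarrow> i \<in> V \<Longrightarrow> block_of \<pi> i = V"
  unfolding block_of_def using block_eq by (intro the_equality) blast+

lemma block_of_mem: "i \<in> {1..n} \<Longrightarrow> block_of \<pi> i \<in> \<pi> \<and> i \<in> block_of \<pi> i"
proof -
  assume "i \<in> {1..n}"
  then obtain V where "V \<in> \<pi>" "i \<in> V"
    using partition_onD1[OF partition] by (metis UnionE)
  then show ?thesis
    using block_of_eq by simp
qed

lemma Min_in_block: "V \<in> \<pi> \<Longrightarrow> Min V \<in> V"
  using block_finite block_nonempty by simp

lemma Max_in_block: "V \<in> \<pi> \<Longrightarrow> Max V \<in> V"
  using block_finite block_nonempty by simp

lemma block_bounds: "V \<in> \<pi> \<Longrightarrow> x \<in> V \<Longrightarrow> Min V \<le> x \<and> x \<le> Max V"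
  using block_finite by simp

lemma Min_block_pos: "V \<in> \<pi> \<Longrightarrow> 1 \<le> Min V"
  using block_subset Min_in_block by fastforce

lemma Max_block_le: "V \<in> \<pi> \<Longrightarrow> Max V \<le> n"
  using block_subset Max_in_block by fastforce

lemma Min_less_Max: "V \<in> \<pi> \<Longrightarrow> Min V < Max V"
proof (rule ccontr)
  assume V: "V \<in> \<pi>" and "\<not> Min V < Max V"
  then have "V \<subseteq> {Min V}"
    using block_bounds[OF V] by fastforce
  then have "card V \<le> 1"
    using card_mono[of "{Min V}" V] by simp
  then show False
    using no_singletons V by fastforce
qed

lemma nested:
  assumes V: "V \<in> \<pi>" and W: "W \<in> \<pi>" and x: "x \<in> V" "x \<notin> W" "Min W < x" "x < Max W"
  shows "Min W < Min V \<and> Max V < Max W"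
proof -
  have VW: "V \<noteq> W"
    using x by blast
  have no_cross: "\<not> (a < b \<and> b < c \<and> c < d \<and> a \<in> A \<and> c \<in> A \<and> b \<in> C \<and> d \<in> C)"
    if "A \<in> \<pi>" "C \<in> \<pi>" "A \<noteq> C" for A C a b c d
    using noncrossing[unfolded noncrossing_def, rule_format, OF that] by blast
  note ends = Min_in_block[OF V] Max_in_block[OF V] Min_in_block[OF W] Max_in_block[OF W]
  have "Min V \<noteq> Min W"
    using block_eq[OF V W Min_in_block[OF V]] Min_in_block[OF W] VW by metis
  moreover have "Max V \<noteq> Max W"
    using block_eq[OF V W Max_in_block[OF V]] Max_in_block[OF W] VW by metis
  moreover have "\<not> Min V < Min W"
    using no_cross[OF V W VW, of "Min V" "Min W" x "Max W"] ends x by auto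
  moreover have "\<not> Max W < Max V"
    using no_cross[OF W V VW[symmetric], of "Min W" x "Max W" "Max V"] ends x by auto
  ultimately show ?thesis
    by simp
qed

lemma kind_at_eq:
  "V \<in> \<pi> \<Longrightarrow> i \<in> V \<Longrightarrow>
    kind_at \<pi> i = (if i = Min V then Opening else if i = Max V then Closing else Middle)"
  by (simp add: kind_at_def block_of_eq)

definition open_blocks :: "nat \<Rightarrow> nat set set" where
  "open_blocks j = {V\<in>\<pi>. Min V \<le> j \<and> j < Max V}"

lemma finite_open_blocks: "finite (open_blocks j)"
  using finite_elements[OF _ partition] by (simp add: open_blocks_def)

lemma open_blocks_Suc:
  assumes "W \<in> \<pi>" "Suc j \<notin> W"
  shows "W \<in> open_blocks j \<longleftrightarrow> W \<in> open_blocks (Suc j)"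
proof -
  have "Min W \<noteq> Suc j" "Max W \<noteq> Suc j"
    using assms Min_in_block Max_in_block by metis+
  then show ?thesis
    by (auto simp: open_blocks_def)
qed

lemma card_open_blocks_Suc:
  assumes "j < n"
  shows "int (card (open_blocks j)) = weight (kind_at \<pi> (Suc j)) + card (open_blocks (Suc j))"
proof -
  let ?i = "Suc j"
  obtain V where V: "V \<in> \<pi>" "?i \<in> V"
    using block_of_mem[of ?i] assms by auto
  have others: "open_blocks j - {V} = open_blocks ?i - {V}"
    using open_blocks_Suc block_eq[OF V(1) _ V(2)] by (auto simp: open_blocks_def)
  have bounds: "Min V < Max V" "Min V \<le> ?i" "?i \<le> Max V"
    using Min_less_Max[OF V(1)] block_bounds[OF V] by auto
  consider "?i = Min V" | "?i = Max V" | "?i \<noteq> Min V" "?i \<noteq> Max V"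
    by blast
  then show ?thesis
  proof cases
    case 1
    then have "V \<in> open_blocks ?i" "V \<notin> open_blocks j"
      using V(1) bounds by (simp_all add: open_blocks_def)
    then have "open_blocks ?i = insert V (open_blocks j)"
      using others by blast
    then have "card (open_blocks ?i) = Suc (card (open_blocks j))"
      using \<open>V \<notin> open_blocks j\<close> by (simp add: finite_open_blocks)
    moreover have "kind_at \<pi> ?i = Opening"
      using kind_at_eq[OF V] 1 by simp
    ultimately show ?thesis
      by simp
  next
    case 2
    then have "V \<in> open_blocks j" "V \<notin> open_blocks ?i"
      using V(1) bounds by (simp_all add: open_blocks_def)
    then have "open_blocks j = insert V (open_blocks ?i)"
      using others by blast
    then have "card (open_blocks j) = Suc (card (open_blocks ?i))"
      using \<open>V \<notin> open_blocks ?i\<close> by (simp add: finite_open_blocks)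
    moreover have "kind_at \<pi> ?i = Closing"
      using kind_at_eq[OF V] 2 bounds by simp
    ultimately show ?thesis
      by simp
  next
    case 3
    then have "V \<in> open_blocks j" "V \<in> open_blocks ?i"
      using V(1) bounds by (simp_all add: open_blocks_def)
    then have "open_blocks j = open_blocks ?i"
      using others by blast
    moreover have "kind_at \<pi> ?i = Middle"
      using kind_at_eq[OF V] 3 by simp
    ultimately show ?thesis
      by simp
  qed
qed

lemma level_kind_word: "j \<le> n \<Longrightarrow> level (kind_word \<pi> n) j = card (open_blocks j)"
proof (induction j rule: inc_induct)
  case base
  have "open_blocks n = {}"
    by (auto simp: open_blocks_def dest: Max_block_le)
  then show ?case
    using level_length[of "kind_word \<pi> n"] by simp
next
  case (step j)
  then show ?case
    using level_Suc[of j "kind_word \<pi> n"] kind_word_nth[of j n \<pi>] card_open_blocks_Suc by simp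
qed

lemma balanced_kind_word: "balanced (kind_word \<pi> n)"
proof -
  have "0 < level (kind_word \<pi> n) (Suc j)"
    if j: "j < n" "kind_word \<pi> n ! j \<noteq> Closing" for j
  proof -
    obtain V where V: "V \<in> \<pi>" "Suc j \<in> V"
      using block_of_mem[of "Suc j"] j(1) by auto
    have "kind_at \<pi> (Suc j) \<noteq> Closing"
      using j kind_word_nth[of j n \<pi>] by simp
    then have "Suc j \<noteq> Max V"
      using kind_at_eq[OF V] Min_less_Max[OF V(1)] by (auto split: if_splits)
    then have "V \<in> open_blocks (Suc j)"
      using V(1) block_bounds[OF V] by (simp add: open_blocks_def)
    then have "open_blocks (Suc j) \<noteq> {}"
      by blast
    then show ?thesis
      using level_kind_word[of "Suc j"] j(1) finite_open_blocks by (simp add: card_gt_0_iff)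
  qed
  moreover have "open_blocks 0 = {}"
    by (auto simp: open_blocks_def dest: Min_block_pos)
  ultimately show ?thesis
    using level_kind_word[of 0] by (simp add: balanced_def admissible_iff_level)
qed

lemma irreducible_kind_word:
  assumes "\<exists>V\<in>\<pi>. 1 \<in> V \<and> n \<in> V"
  shows "irreducible (kind_word \<pi> n)"
proof -
  obtain V where V: "V \<in> \<pi>" "1 \<in> V" "n \<in> V"
    using assms by blast
  have "1 \<le> n"
    using block_subset[OF V(1)] V(2) by auto
  moreover have "level (kind_word \<pi> n) j \<noteq> 0" if "0 < j" "j < n" for j
  proof -
    have "V \<in> open_blocks j"
      using block_bounds[OF V(1) V(2)] block_bounds[OF V(1) V(3)] that V(1)
      by (auto simp: open_blocks_def)
    then show ?thesis
      using level_kind_word[of j] that finite_open_blocks by auto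
  qed
  moreover have "kind_word \<pi> n \<noteq> []"
    using \<open>1 \<le> n\<close> by (simp flip: length_greater_0_conv)
  ultimately show ?thesis
    using balanced_kind_word by (auto simp: irreducible_def)
qed

lemma open_blocks_Min_subset:
  assumes V: "V \<in> \<pi>" "i \<in> V" and m: "Min V \<le> m" "m < i"
  shows "open_blocks (Min V) \<subseteq> open_blocks m"
proof
  fix W assume "W \<in> open_blocks (Min V)"
  then have W: "W \<in> \<pi>" "Min W \<le> Min V" "Min V < Max W"
    by (auto simp: open_blocks_def)
  show "W \<in> open_blocks m"
  proof (cases "W = V")
    case True
    then show ?thesis
      using W m block_bounds[OF V] by (auto simp: open_blocks_def)
  next
    case False
    then have "Min V \<notin> W"
      using block_eq[OF V(1) W(1) Min_in_block[OF V(1)]] by blast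
    then have "Min W \<noteq> Min V"
      using Min_in_block[OF W(1)] by auto
    then have "Min W < Min V"
      using W(2) by simp
    then have "Max V < Max W"
      using nested[OF V(1) W(1) Min_in_block[OF V(1)] \<open>Min V \<notin> W\<close>] W(3) by blast
    then show ?thesis
      using W m block_bounds[OF V] by (auto simp: open_blocks_def)
  qed
qed

lemma open_blocks_before_subset:
  assumes V: "V \<in> \<pi>" "i \<in> V" "Min V < i"
  shows "open_blocks (i - 1) \<subseteq> open_blocks (Min V)"
proof
  fix W assume "W \<in> open_blocks (i - 1)"
  then have W: "W \<in> \<pi>" "Min W \<le> i - 1" "i - 1 < Max W"
    by (auto simp: open_blocks_def)
  show "W \<in> open_blocks (Min V)"
  proof (cases "W = V")
    case True
    then show ?thesis
      using W Min_less_Max[OF V(1)] by (auto simp: open_blocks_def)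
  next
    case False
    then have "i \<notin> W"
      using block_eq[OF V(1) W(1) V(2)] by blast
    then have "Max W \<noteq> i"
      using Max_in_block[OF W(1)] by auto
    then have "Min W < i" "i < Max W"
      using W(2,3) V(3) by auto
    then have "Min W < Min V" "Max V < Max W"
      using nested[OF V(1) W(1) V(2) \<open>i \<notin> W\<close>] by auto
    then show ?thesis
      using W Min_less_Max[OF V(1)] by (auto simp: open_blocks_def)
  qed
qed

lemma opens_Min_block:
  assumes i: "i \<in> {1..n}"
  shows "opens (kind_word \<pi> n) (Min (block_of \<pi> i)) i"
proof -
  let ?ts = "kind_word \<pi> n"
  define V where "V = block_of \<pi> i"
  have V: "V \<in> \<pi>" "i \<in> V"
    using block_of_mem[OF i] by (auto simp: V_def)
  define q where "q = Min V"
  have q: "1 \<le> q" "q \<le> i" "q \<le> n"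
    using block_subset[OF V(1)] Min_in_block[OF V(1)] block_bounds[OF V] i by (auto simp: q_def)
  have "?ts ! (q - 1) = Opening"
    using kind_word_nth[of "q - 1" n \<pi>] q kind_at_eq[OF V(1) Min_in_block[OF V(1)]]
    by (simp add: q_def)
  moreover have "level ?ts q \<le> level ?ts m" if "q \<le> m" "m < i" for m
    using open_blocks_Min_subset[OF V that[unfolded q_def]] level_kind_word[of q] level_kind_word[of m]
      card_mono[OF finite_open_blocks] that q i by (simp add: q_def)
  moreover have "?ts ! (i - 1) \<noteq> Opening \<and> level ?ts (i - 1) = level ?ts q" if "q \<noteq> i"
  proof
    have "i - 1 < n" "Suc (i - 1) = i"
      using i by auto
    then have "?ts ! (i - 1) = kind_at \<pi> i"
      using kind_word_nth[of "i - 1" n \<pi>] by simp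
    then show "?ts ! (i - 1) \<noteq> Opening"
      using kind_at_eq[OF V] that by (simp add: q_def)
    have "q < i"
      using q that by simp
    then have "open_blocks (i - 1) = open_blocks q"
      using open_blocks_before_subset[OF V] open_blocks_Min_subset[OF V, of "i - 1"]
      by (auto simp: q_def)
    then show "level ?ts (i - 1) = level ?ts q"
      using level_kind_word[of "i - 1"] level_kind_word[of q] q i by simp
  qed
  ultimately show ?thesis
    using q i by (auto simp: opens_def V_def[symmetric] q_def[symmetric])
qed

lemma word_partition_kind_word: "word_partition n (kind_word \<pi> n) = \<pi>"
proof -
  have opener: "opener (kind_word \<pi> n) i = Min (block_of \<pi> i)" if "i \<in> {1..n}" for i
    using opener_eq[OF opens_Min_block[OF that]] .
  have block: "{k\<in>{1..n}. opener (kind_word \<pi> n) k = opener (kind_word \<pi> n) i} = block_of \<pi> i"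
    if i: "i \<in> {1..n}" for i
  proof -
    have "block_of \<pi> k = block_of \<pi> i \<longleftrightarrow> Min (block_of \<pi> k) = Min (block_of \<pi> i)"
      if "k \<in> {1..n}" for k
      using block_of_mem[OF i] block_of_mem[OF that] block_eq Min_in_block by metis
    moreover have "k \<in> block_of \<pi> i \<longleftrightarrow> k \<in> {1..n} \<and> block_of \<pi> k = block_of \<pi> i" for k
      using block_of_mem[OF i] block_of_mem block_of_eq block_subset by blast
    ultimately show ?thesis
      using opener i by auto
  qed
  have "\<pi> = block_of \<pi> ` {1..n}"
  proof
    show "\<pi> \<subseteq> block_of \<pi> ` {1..n}"
    proof
      fix V assume V: "V \<in> \<pi>"
      then show "V \<in> block_of \<pi> ` {1..n}"
        using block_of_eq[OF V Min_in_block[OF V]] block_subset[OF V] Min_in_block[OF V]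
        by (metis image_eqI subsetD)
    qed
    show "block_of \<pi> ` {1..n} \<subseteq> \<pi>"
      using block_of_mem by auto
  qed
  then show ?thesis
    unfolding word_partition_def using block by (metis (no_types, lifting) image_cong)
qed

end

locale balanced_word =
  fixes ts :: "kind list" and n :: nat
  assumes balanced: "balanced ts" and length: "length ts = n"
begin

lemma level_nonneg: "0 \<le> level ts j"
  using balanced_level_nonneg[OF balanced] .

lemma level_0_eq_0: "level ts 0 = 0"
  using balanced by (simp add: balanced_def)

lemma level_n_eq_0: "level ts n = 0"
  using level_length[of ts] length by simp

lemma level_pred': "1 \<le> q \<Longrightarrow> q \<le> n \<Longrightarrow> level ts (q - 1) = weight (ts ! (q - 1)) + level ts q"
  using level_pred[of q ts] length by simp

lemma level_before_non_opening:
  assumes i: "i \<in> {1..n}" and not_opening: "ts ! (i - 1) \<noteq> Opening"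
  shows "1 \<le> level ts (i - 1)"
proof -
  have step: "level ts (i - 1) = weight (ts ! (i - 1)) + level ts i"
    using level_pred'[of i] i by simp
  show ?thesis
  proof (cases "ts ! (i - 1)")
    case Middle
    moreover have "i - 1 < n" "Suc (i - 1) = i"
      using i by auto
    ultimately have "0 < level ts i"
      using balanced_level_pos[OF balanced, of "i - 1"] length by simp
    then show ?thesis
      using step Middle by simp
  qed (use step level_nonneg[of i] not_opening in simp_all)
qed

text \<open>The opening of the block of a non-opening position \<open>i\<close> comes right after the last
  position before \<open>i\<close> at which the level is below its value just before \<open>i\<close>.\<close>

lemma opens_exists:
  assumes i: "i \<in> {1..n}"
  shows "\<exists>q. opens ts q i"
proof (cases "ts ! (i - 1) = Opening")
  case True
  then have "opens ts i i"
    using i length by (auto simp: opens_def)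
  then show ?thesis
    by blast
next
  case not_opening: False
  define lam where "lam = level ts (i - 1)"
  define M where "M = {m. m \<le> i - 1 \<and> level ts m < lam}"
  have "0 \<in> M"
    using level_0_eq_0 level_before_non_opening[OF i not_opening] by (simp add: M_def lam_def)
  then have "M \<noteq> {}"
    by blast
  moreover have "finite M"
    by (simp add: M_def)
  ultimately have m0: "Max M \<in> M" and m0_max: "\<And>m. m \<in> M \<Longrightarrow> m \<le> Max M"
    by simp_all
  define q where "q = Suc (Max M)"
  have "Max M \<noteq> i - 1"
    using m0 by (auto simp: M_def lam_def)
  then have "Max M < i - 1"
    using m0 by (simp add: M_def)
  have ge: "lam \<le> level ts m" if "q \<le> m" "m < i" for m
  proof (rule ccontr)
    assume "\<not> lam \<le> level ts m"
    then have "m \<in> M"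
      using that(2) by (simp add: M_def)
    then show False
      using m0_max that(1) by (force simp: q_def)
  qed
  have "Max M < length ts"
    using \<open>Max M < i - 1\<close> i length by auto
  then have "level ts (Max M) = weight (ts ! Max M) + level ts q"
    using level_Suc[of "Max M" ts] by (simp add: q_def)
  moreover have "lam \<le> level ts q" "level ts (Max M) < lam"
    using ge[of q] \<open>Max M < i - 1\<close> m0 by (auto simp: q_def M_def)
  ultimately have "ts ! Max M = Opening" "level ts q = lam"
    using weight_cases[of "ts ! Max M"] by auto
  then have "opens ts q i"
    using ge \<open>Max M < i - 1\<close> i length not_opening by (auto simp: opens_def q_def lam_def)
  then show ?thesis
    by blast
qed

lemma opens_opener: "i \<in> {1..n} \<Longrightarrow> opens ts (opener ts i) i"
  using opens_exists opener_eq by blast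

lemma closer_exists:
  assumes q: "1 \<le> q" "q \<le> n" "ts ! (q - 1) = Opening"
  shows "\<exists>k. q < k \<and> k \<le> n \<and> ts ! (k - 1) = Closing \<and> opens ts q k \<and>
    (\<forall>k'. opens ts q k' \<longrightarrow> k' \<le> k)"
proof -
  define lam where "lam = level ts q"
  have "level ts (q - 1) = lam - 1"
    using level_pred'[OF q(1,2)] q(3) by (simp add: lam_def)
  then have "1 \<le> lam"
    using level_nonneg[of "q - 1"] by simp
  then have "q < n"
    using q(2) level_n_eq_0 by (cases "q = n") (auto simp: lam_def)
  define K where "K = {k. q < k \<and> k \<le> n \<and> level ts k < lam}"
  have "n \<in> K"
    using \<open>q < n\<close> level_n_eq_0 \<open>1 \<le> lam\<close> by (simp add: K_def)
  then have "K \<noteq> {}"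
    by blast
  moreover have "finite K"
    by (simp add: K_def)
  ultimately have k: "Min K \<in> K" and k_min: "\<And>m. m \<in> K \<Longrightarrow> Min K \<le> m"
    by simp_all
  define k where "k = Min K"
  have k_bounds: "q < k" "k \<le> n" "level ts k < lam"
    using k by (auto simp: K_def k_def)
  have ge: "lam \<le> level ts m" if "q \<le> m" "m < k" for m
  proof (rule ccontr)
    assume "\<not> lam \<le> level ts m"
    moreover have "m \<noteq> q"
      using calculation by (auto simp: lam_def)
    ultimately have "m \<in> K"
      using that k_bounds by (simp add: K_def)
    then show False
      using k_min that(2) by (force simp: k_def)
  qed
  have "level ts (k - 1) = weight (ts ! (k - 1)) + level ts k"
    using level_pred'[of k] k_bounds by simp
  moreover have "lam \<le> level ts (k - 1)"
    using ge[of "k - 1"] k_bounds by simp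
  ultimately have closing: "ts ! (k - 1) = Closing" "level ts (k - 1) = lam"
    using k_bounds(3) weight_cases[of "ts ! (k - 1)"] by auto
  have "opens ts q k"
    using q k_bounds closing ge length by (auto simp: opens_def lam_def)
  moreover have "k' \<le> k" if "opens ts q k'" for k'
  proof (rule ccontr)
    assume "\<not> k' \<le> k"
    then have "level ts q \<le> level ts k"
      using that k_bounds unfolding opens_def by auto
    then show False
      using k_bounds(3) by (simp add: lam_def)
  qed
  ultimately show ?thesis
    using k_bounds closing by blast
qed

definition block :: "nat \<Rightarrow> nat set" where
  "block i = {k\<in>{1..n}. opener ts k = opener ts i}"

lemma word_partition_eq: "word_partition n ts = block ` {1..n}"
  by (simp add: word_partition_def block_def)

lemma block_subset: "block i \<subseteq> {1..n}"
  by (auto simp: block_def)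

lemma finite_block: "finite (block i)"
  using block_subset finite_subset by blast

lemma block_self: "i \<in> {1..n} \<Longrightarrow> i \<in> block i"
  by (simp add: block_def)

lemma block_eq: "k \<in> block i \<Longrightarrow> block k = block i"
  by (auto simp: block_def)

lemma mem_block: "k \<in> block i \<longleftrightarrow> k \<in> {1..n} \<and> opens ts (opener ts i) k"
proof
  assume "k \<in> block i"
  then have k: "k \<in> {1..n}" "opener ts k = opener ts i"
    by (auto simp: block_def)
  then show "k \<in> {1..n} \<and> opens ts (opener ts i) k"
    using opens_opener[OF k(1)] by simp
next
  assume "k \<in> {1..n} \<and> opens ts (opener ts i) k"
  then show "k \<in> block i"
    using opener_eq by (auto simp: block_def)
qed

lemma partition_word_partition: "partition_on {1..n} (word_partition n ts)"
proof (rule partition_onI)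
  show "\<Union> (word_partition n ts) = {1..n}"
    using block_subset block_self by (auto simp: word_partition_eq)
  show "{} \<notin> word_partition n ts"
    using block_self unfolding word_partition_eq by (metis emptyE imageE)
  show "disjnt V W" if "V \<in> word_partition n ts" "W \<in> word_partition n ts" "V \<noteq> W" for V W
    using that block_eq unfolding word_partition_eq disjnt_def by blast
qed

lemma block_of_word_partition: "i \<in> {1..n} \<Longrightarrow> block_of (word_partition n ts) i = block i"
  unfolding block_of_def word_partition_eq
  by (rule the_equality) (auto simp: block_self dest: block_eq)

lemma Min_block: "i \<in> {1..n} \<Longrightarrow> Min (block i) = opener ts i"
proof -
  assume i: "i \<in> {1..n}"
  then have op: "opens ts (opener ts i) i"
    by (rule opens_opener)
  then have "opener ts i \<in> {1..n}"
    using i by (simp add: opens_def)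
  then have "opener ts i \<in> block i"
    using mem_block opens_self[OF op] by simp
  moreover have "\<forall>k\<in>block i. opener ts i \<le> k"
    using mem_block by (simp add: opens_def)
  ultimately show ?thesis
    using finite_block by (intro Min_eqI) auto
qed

lemma Max_block:
  assumes i: "i \<in> {1..n}"
  shows "\<exists>k. Max (block i) = k \<and> ts ! (k - 1) = Closing \<and> opener ts i < k"
proof -
  have "opens ts (opener ts i) i"
    using opens_opener[OF i] .
  then have q: "1 \<le> opener ts i" "opener ts i \<le> n" "ts ! (opener ts i - 1) = Opening"
    using i by (auto simp: opens_def)
  obtain k where k: "opener ts i < k" "k \<le> n" "ts ! (k - 1) = Closing" "opens ts (opener ts i) k"
      "\<forall>k'. opens ts (opener ts i) k' \<longrightarrow> k' \<le> k"
    using closer_exists[OF q] by blast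
  have "Max (block i) = k"
    using mem_block k q finite_block by (intro Max_eqI) auto
  then show ?thesis
    using k by blast
qed

lemma card_block: "i \<in> {1..n} \<Longrightarrow> 2 \<le> card (block i)"
proof -
  assume i: "i \<in> {1..n}"
  obtain k where "Max (block i) = k" "opener ts i < k"
    using Max_block[OF i] by blast
  then have "card {Min (block i), Max (block i)} = 2"
    using Min_block[OF i] by simp
  moreover have "block i \<noteq> {}"
    using block_self[OF i] by blast
  then have "{Min (block i), Max (block i)} \<subseteq> block i"
    using finite_block by simp
  ultimately show ?thesis
    using card_mono[OF finite_block] by metis
qed

lemma noncrossing_word_partition: "noncrossing (word_partition n ts)"
  unfolding noncrossing_def
proof (intro ballI impI notI)
  fix V W assume V: "V \<in> word_partition n ts" and W: "W \<in> word_partition n ts" and "V \<noteq> W"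
  assume "\<exists>a b c d. a < b \<and> b < c \<and> c < d \<and> a \<in> V \<and> c \<in> V \<and> b \<in> W \<and> d \<in> W"
  then obtain a b c d where abcd: "a < b" "b < c" "c < d" "a \<in> V" "c \<in> V" "b \<in> W" "d \<in> W"
    by blast
  obtain x y where xy: "V = block x" "W = block y"
    using V W by (auto simp: word_partition_eq)
  then have "opener ts x = opener ts y"
    using opens_noncrossing abcd mem_block by blast
  then show False
    using \<open>V \<noteq> W\<close> xy by (auto simp: block_def)
qed

lemma word_partition_first_last:
  assumes "irreducible ts"
  shows "\<exists>V\<in>word_partition n ts. 1 \<in> V \<and> n \<in> V"
proof -
  have "opens ts 1 n"
    using irreducible_opens_first_last[OF assms] length by simp
  then have "opener ts 1 = 1" "opener ts n = 1"
    using opener_self opener_eq by blast+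
  moreover have "2 \<le> n"
    using irreducible_length[OF assms] length by simp
  ultimately have "1 \<in> block 1" "n \<in> block 1"
    by (auto simp: block_def)
  moreover have "block 1 \<in> word_partition n ts"
    unfolding word_partition_eq using \<open>2 \<le> n\<close> by (intro imageI) simp
  ultimately show ?thesis
    by blast
qed

lemma Min_block_eq_iff:
  assumes i: "i \<in> {1..n}"
  shows "i = Min (block i) \<longleftrightarrow> ts ! (i - 1) = Opening"
proof
  assume "i = Min (block i)"
  then have "opens ts i i"
    using opens_opener[OF i] Min_block[OF i] by simp
  then show "ts ! (i - 1) = Opening"
    by (simp add: opens_def)
next
  assume "ts ! (i - 1) = Opening"
  then have "opens ts i i"
    using i length by (auto simp: opens_def)
  then show "i = Min (block i)"
    using opener_eq Min_block[OF i] by simp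
qed

lemma Max_block_eq_iff:
  assumes i: "i \<in> {1..n}"
  shows "i = Max (block i) \<longleftrightarrow> ts ! (i - 1) = Closing"
proof
  assume "i = Max (block i)"
  then show "ts ! (i - 1) = Closing"
    using Max_block[OF i] by auto
next
  assume closing: "ts ! (i - 1) = Closing"
  let ?q = "opener ts i"
  have q: "opens ts ?q i"
    using opens_opener[OF i] .
  then have "level ts (i - 1) = level ts ?q"
    using closing by (auto simp: opens_def)
  moreover have "level ts (i - 1) = weight (ts ! (i - 1)) + level ts i"
    using level_pred'[of i] i by simp
  ultimately have below: "level ts i < level ts ?q"
    using closing by simp
  have "k \<le> i" if "k \<in> block i" for k
  proof (rule ccontr)
    assume "\<not> k \<le> i"
    moreover have "opens ts ?q k"
      using that mem_block by simp
    moreover have "?q \<le> i"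
      using q by (simp add: opens_def)
    ultimately have "level ts ?q \<le> level ts i"
      unfolding opens_def by simp
    then show False
      using below by simp
  qed
  then show "i = Max (block i)"
    using block_self[OF i] finite_block by (intro Max_eqI[symmetric]) auto
qed

lemma kind_word_word_partition: "kind_word (word_partition n ts) n = ts"
proof (rule nth_equalityI)
  show "length (kind_word (word_partition n ts) n) = length ts"
    using length by simp
  fix j assume "j < length (kind_word (word_partition n ts) n)"
  then have j: "j < n" and i: "Suc j \<in> {1..n}"
    by simp_all
  have "kind_word (word_partition n ts) n ! j =
      (if Suc j = Min (block (Suc j)) then Opening
       else if Suc j = Max (block (Suc j)) then Closing else Middle)"
    using kind_word_nth[OF j] block_of_word_partition[OF i] by (simp add: kind_at_def)
  then show "kind_word (word_partition n ts) n ! j = ts ! j"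
    using Min_block_eq_iff[OF i] Max_block_eq_iff[OF i] by (cases "ts ! j") simp_all
qed

end

lemma word_partition_NC_ns_tilde:
  assumes "irreducible ts"
  shows "word_partition (length ts) ts \<in> NC_ns_tilde (length ts)"
proof -
  interpret balanced_word ts "length ts"
    using assms by unfold_locales (simp_all add: irreducible_def)
  show ?thesis
    using partition_word_partition noncrossing_word_partition word_partition_first_last[OF assms]
      card_block by (auto simp: NC_ns_tilde_def word_partition_eq)
qed

lemma nc_partition_NC_ns_tilde: "\<pi> \<in> NC_ns_tilde n \<Longrightarrow> nc_partition n \<pi>"
  by (simp add: NC_ns_tilde_def nc_partition_def)

lemma bij_betw_kind_word: "bij_betw (\<lambda>\<pi>. kind_word \<pi> n) (NC_ns_tilde n) (irreducible_words n)"
proof (rule bij_betw_byWitness[where f' = "word_partition n"])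
  show "\<forall>\<pi>\<in>NC_ns_tilde n. word_partition n (kind_word \<pi> n) = \<pi>"
    using nc_partition.word_partition_kind_word nc_partition_NC_ns_tilde by blast
  show "\<forall>ts\<in>irreducible_words n. kind_word (word_partition n ts) n = ts"
    using balanced_word.kind_word_word_partition
    by (auto simp: irreducible_words_def irreducible_def balanced_word_def)
  show "(\<lambda>\<pi>. kind_word \<pi> n) ` NC_ns_tilde n \<subseteq> irreducible_words n"
  proof
    fix ts assume "ts \<in> (\<lambda>\<pi>. kind_word \<pi> n) ` NC_ns_tilde n"
    then obtain \<pi> where \<pi>: "\<pi> \<in> NC_ns_tilde n" "ts = kind_word \<pi> n"
      by blast
    then have "irreducible ts"
      using nc_partition.irreducible_kind_word[OF nc_partition_NC_ns_tilde[OF \<pi>(1)]]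
      by (simp add: NC_ns_tilde_def)
    then show "ts \<in> irreducible_words n"
      using \<pi>(2) by (simp add: irreducible_words_def)
  qed
  show "word_partition n ` irreducible_words n \<subseteq> NC_ns_tilde n"
    using word_partition_NC_ns_tilde by (auto simp: irreducible_words_def)
qed

section \<open>Evaluating words in the vacuum\<close>

lemma sum_lists_length_Suc:
  fixes f :: "'a::finite list \<Rightarrow> 'c::comm_monoid_add"
  shows "(\<Sum>xs | length xs = Suc n. f xs) = (\<Sum>x\<in>UNIV. \<Sum>xs | length xs = n. f (x # xs))"
proof -
  have "{xs :: 'a list. length xs = Suc n} = (\<lambda>(x, xs). x # xs) ` (UNIV \<times> {xs. length xs = n})"
    by (auto simp: length_Suc_conv image_iff)
  moreover have "inj_on (\<lambda>(x, xs). x # xs) (UNIV \<times> {xs :: 'a list. length xs = n})"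
    by (auto simp: inj_on_def)
  ultimately show ?thesis
    by (simp add: sum.reindex sum.cartesian_product finite_list_length split_def)
qed

definition lin_ext :: "('b list \<Rightarrow> complex) \<Rightarrow> 'b fvec \<Rightarrow> complex" where
  "lin_ext F v = (\<Sum>p\<leftarrow>v. fst p * F (snd p))"

lemma lin_ext_simps [simp]:
  "lin_ext F [] = 0"
  "lin_ext F (p # v) = fst p * F (snd p) + lin_ext F v"
  "lin_ext F (v @ w) = lin_ext F v + lin_ext F w"
  by (simp_all add: lin_ext_def)

lemma lin_ext_scale: "lin_ext F (map (\<lambda>q. (c * fst q, snd q)) v) = c * lin_ext F v"
  by (induction v) (auto simp: algebra_simps)

lemma lin_ext_op_apply: "lin_ext F (op_apply Y v) = lin_ext (\<lambda>w. lin_ext F (Y w)) v"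
  by (induction v) (auto simp: op_apply_def lin_ext_scale)

lemma lin_ext_sum: "lin_ext (\<lambda>w. \<Sum>t\<in>A. G t w) v = (\<Sum>t\<in>A. lin_ext (G t) v)"
  by (induction v) (auto simp: sum_distrib_left sum.distrib)

definition vacuum_coeff :: "'b list \<Rightarrow> complex" where
  "vacuum_coeff w = (if w = [] then 1 else 0)"

lemma vacuum_state_eq_lin_ext:
  "vacuum_state sc st gam phi Ys = lin_ext vacuum_coeff (ops_apply Ys vac)"
proof -
  have "ipw sc st gam phi w [] = vacuum_coeff w" for w
    by (cases w) (auto simp: vacuum_coeff_def)
  then show ?thesis
    by (simp add: vacuum_state_def fock_ip_def vac_def lin_ext_def)
qed

lemma vacuum_state_Nil: "vacuum_state sc st gam phi [] = 1"
  by (simp add: vacuum_state_eq_lin_ext vac_def vacuum_coeff_def)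

lemma ops_apply_append: "ops_apply (Ys @ Zs) v = ops_apply Ys (ops_apply Zs v)"
  by (induction Ys) auto

lemma ops_apply_scale:
  "ops_apply Ys (map (\<lambda>q. (c * fst q, snd q)) v) = map (\<lambda>q. (c * fst q, snd q)) (ops_apply Ys v)"
proof -
  have "op_apply Y (map (\<lambda>q. (c * fst q, snd q)) v) = map (\<lambda>q. (c * fst q, snd q)) (op_apply Y v)"
    for Y and v :: "'a fvec"
    by (induction v) (auto simp: op_apply_def mult.assoc)
  then show ?thesis
    by (induction Ys) auto
qed

context
  fixes sc :: "complex \<Rightarrow> 'b::ring_1 \<Rightarrow> 'b" and st :: "'b \<Rightarrow> 'b"
    and gam :: "'b \<Rightarrow> 'b" and phi :: "'b \<Rightarrow> complex" and L :: "'b \<Rightarrow> 'b \<Rightarrow> 'b"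
begin

fun kind_op :: "kind \<Rightarrow> 'b \<Rightarrow> 'b fop" where
  "kind_op Opening = a_minus sc gam phi"
| "kind_op Closing = a_plus"
| "kind_op Middle = a_zero L"

abbreviation word_ops :: "kind list \<Rightarrow> 'b list \<Rightarrow> 'b fop list" where
  "word_ops ts us \<equiv> map2 kind_op ts us"

lemma lin_ext_Xops:
  "lin_ext F (ops_apply (map (Xop sc gam phi L) us) v) =
     (\<Sum>ts | length ts = length us. lin_ext F (ops_apply (word_ops ts us) v))"
proof (induction us arbitrary: F)
  case (Cons u us)
  let ?V = "\<lambda>Ys. ops_apply Ys v"
  have "lin_ext F (?V (map (Xop sc gam phi L) (u # us))) =
      lin_ext (\<lambda>w. \<Sum>t\<in>UNIV. lin_ext F (kind_op t u w)) (?V (map (Xop sc gam phi L) us))"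
    by (simp add: lin_ext_op_apply Xop_def UNIV_kind add_ac)
  also have "\<dots> = (\<Sum>t\<in>UNIV. \<Sum>ts | length ts = length us. lin_ext F (?V (word_ops (t # ts) (u # us))))"
    by (simp add: lin_ext_sum Cons.IH lin_ext_op_apply)
  also have "\<dots> = (\<Sum>ts | length ts = length (u # us). lin_ext F (?V (word_ops ts (u # us))))"
    by (simp add: sum_lists_length_Suc)
  finally show ?case .
qed simp

lemma ops_apply_vac_admissible:
  assumes "length ts = length us" "admissible ts"
  shows "\<exists>c w. ops_apply (word_ops ts us) vac = [(c, w)] \<and> int (length w) = height ts"
  using assms
proof (induction ts arbitrary: us)
  case (Cons t ts)
  then obtain u us' where us: "us = u # us'" "length ts = length us'"
    by (cases us) auto
  obtain c w where cw: "ops_apply (word_ops ts us') vac = [(c, w)]"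
    "int (length w) = height ts"
    using Cons.IH[OF us(2)] Cons.prems(2) by auto
  have "t = Closing \<or> w \<noteq> []"
    using Cons.prems(2) cw(2) by auto
  then show ?case
    using cw us by (cases t; cases w rule: remdups_adj.cases) (auto simp: op_apply_def a_plus_def)
qed (simp add: vac_def)

lemma ops_apply_vac_not_admissible:
  "length ts = length us \<Longrightarrow> \<not> admissible ts \<Longrightarrow> ops_apply (word_ops ts us) vac = []"
proof (induction ts arbitrary: us)
  case (Cons t ts)
  then obtain u us' where us: "us = u # us'" "length ts = length us'"
    by (cases us) auto
  show ?case
  proof (cases "admissible ts")
    case True
    with Cons.prems have t: "t \<noteq> Closing" "height ts \<le> 0"
      by auto
    obtain c w where cw: "ops_apply (word_ops ts us') vac = [(c, w)]" "int (length w) = height ts"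
      using ops_apply_vac_admissible[OF us(2) True] by blast
    with t(2) have "w = []"
      by (metis of_nat_le_0_iff length_0_conv)
    with t(1) cw(1) us show ?thesis
      by (cases t) (auto simp: op_apply_def)
  qed (use Cons.IH us in \<open>simp add: op_apply_def\<close>)
qed simp

definition word_value :: "kind list \<Rightarrow> 'b list \<Rightarrow> complex" where
  "word_value ts us = vacuum_state sc st gam phi (word_ops ts us)"

lemma word_value_not_balanced:
  assumes "length ts = length us" "\<not> balanced ts"
  shows "word_value ts us = 0"
proof (cases "admissible ts")
  case True
  then obtain c w where cw: "ops_apply (word_ops ts us) vac = [(c, w)]" "int (length w) = height ts"
    using ops_apply_vac_admissible[OF assms(1)] by blast
  with True assms(2) have "w \<noteq> []"
    by (auto simp: balanced_def)
  with cw(1) show ?thesis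
    by (simp add: word_value_def vacuum_state_eq_lin_ext vacuum_coeff_def balanced_def)
next
  case False
  then show ?thesis
    by (simp add: word_value_def vacuum_state_eq_lin_ext ops_apply_vac_not_admissible[OF assms(1)])
qed

lemma word_value_append:
  assumes "length ts = length us" "length ts' = length us'" "balanced ts'"
  shows "word_value (ts @ ts') (us @ us') = word_value ts us * word_value ts' us'"
proof -
  obtain c w where cw: "ops_apply (word_ops ts' us') vac = [(c, w)]" "int (length w) = height ts'"
    using ops_apply_vac_admissible[OF assms(2)] assms(3) by (auto simp: balanced_def)
  then have vac_eigen: "ops_apply (word_ops ts' us') vac = map (\<lambda>q. (c * fst q, snd q)) vac"
    using assms(3) by (simp add: balanced_def vac_def)
  then have "word_value ts' us' = c"
    by (simp add: word_value_def vacuum_state_eq_lin_ext vac_def vacuum_coeff_def)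
  moreover have "ops_apply (word_ops (ts @ ts') (us @ us')) vac =
      map (\<lambda>q. (c * fst q, snd q)) (ops_apply (word_ops ts us) vac)"
    using assms(1) vac_eigen by (simp add: ops_apply_append ops_apply_scale del: list.map)
  ultimately show ?thesis
    by (simp add: word_value_def vacuum_state_eq_lin_ext lin_ext_scale)
qed

lemma vacuum_state_Xops:
  "vacuum_state sc st gam phi (map (Xop sc gam phi L) us) =
     (\<Sum>ts | length ts = length us. word_value ts us)"
  by (simp add: vacuum_state_eq_lin_ext lin_ext_Xops word_value_def)

lemma vacuum_state_Xops_balanced:
  "vacuum_state sc st gam phi (map (Xop sc gam phi L) us) =
     (\<Sum>ts\<in>balanced_words (length us). word_value ts us)"
  unfolding vacuum_state_Xops
  by (rule sum.mono_neutral_right)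
    (auto simp: finite_list_length balanced_words_def word_value_def[symmetric] word_value_not_balanced)

lemma sum_word_value_first_return:
  assumes "us \<noteq> []"
  shows "(\<Sum>ts\<in>balanced_words (length us). word_value ts us) =
    (\<Sum>k=1..length us. (\<Sum>ts\<in>irreducible_words k. word_value ts (take k us)) *
                      (\<Sum>ts\<in>balanced_words (length us - k). word_value ts (drop k us)))"
proof -
  have "word_value (ts @ ts') us = word_value ts (take k us) * word_value ts' (drop k us)"
    if "k \<in> {1..length us}" "ts \<in> irreducible_words k" "ts' \<in> balanced_words (length us - k)"
    for k ts ts'
    using that word_value_append[of ts "take k us" ts' "drop k us"]
    by (simp add: irreducible_words_def balanced_words_def)
  then show ?thesis
    using assms
    by (simp add: sum_balanced_words_first_return Suc_le_eq sum_product)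
qed

end

lemma W_M_eq_word_ops:
  "W_M sc gam phi L \<pi> us = map2 (kind_op sc gam phi L) (kind_word \<pi> (length us)) us"
proof (rule nth_equalityI)
  show "length (W_M sc gam phi L \<pi> us) = length (map2 (kind_op sc gam phi L) (kind_word \<pi> (length us)) us)"
    by (simp add: W_M_def del: upt_Suc)
  fix j assume "j < length (W_M sc gam phi L \<pi> us)"
  then have j: "j < length us"
    by (simp add: W_M_def del: upt_Suc)
  then have "[1..<length us + 1] ! j = Suc j"
    by (simp del: upt_Suc)
  then show "W_M sc gam phi L \<pi> us ! j = map2 (kind_op sc gam phi L) (kind_word \<pi> (length us)) us ! j"
    using j kind_word_nth[OF j, of \<pi>]
    by (simp add: W_M_def kind_at_def Let_def del: upt_Suc)
qed

lemma boolean_cumulant_Xops: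
  assumes B: "is_boolean_cumulants (vacuum_state sc st gam phi) B" and "us \<noteq> []"
  shows "B (map (Xop sc gam phi L) us) =
    (\<Sum>ts\<in>irreducible_words (length us). word_value sc st gam phi L ts us)"
proof (rule boolean_cumulants_unique[where M = "\<lambda>us. vacuum_state sc st gam phi (map (Xop sc gam phi L) us)"])
  have moment: "boolean_moment B Ys = vacuum_state sc st gam phi Ys" for Ys
    using B by (cases "Ys = []") (simp_all add: is_boolean_cumulants_iff vacuum_state_Nil)
  show "vacuum_state sc st gam phi (map (Xop sc gam phi L) xs) =
      (\<Sum>k=1..length xs. B (map (Xop sc gam phi L) (take k xs)) *
         vacuum_state sc st gam phi (map (Xop sc gam phi L) (drop k xs)))" if "xs \<noteq> []" for xs
    using boolean_moment_recursion[of "map (Xop sc gam phi L) xs" B] that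
    by (simp add: moment take_map drop_map)
  show "vacuum_state sc st gam phi (map (Xop sc gam phi L) xs) =
      (\<Sum>k=1..length xs. (\<Sum>ts\<in>irreducible_words (length (take k xs)). word_value sc st gam phi L ts (take k xs)) *
         vacuum_state sc st gam phi (map (Xop sc gam phi L) (drop k xs)))" if "xs \<noteq> []" for xs
    using sum_word_value_first_return[OF that, of sc st gam phi L]
    by (simp add: vacuum_state_Xops_balanced)
qed (simp_all add: vacuum_state_Nil assms(2))

theorem lemma3p4:
  fixes sc :: "complex \<Rightarrow> 'b::ring_1 \<Rightarrow> 'b" and st :: "'b \<Rightarrow> 'b"
    and phi :: "'b \<Rightarrow> complex" and gam :: "'b \<Rightarrow> 'b" and L :: "'b \<Rightarrow> 'b \<Rightarrow> 'b"
    and B :: "'b fop list \<Rightarrow> complex" and us :: "'b list"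
  assumes "star_algebra sc st"
    and "star_linear_functional sc st phi"
    and "star_linear_map sc st gam"
    and "star_bilinear_map sc st L"
    and "positive_functional st phi" and "faithful_functional st phi"
    and "completely_positive st (gp sc gam phi)"
    and "\<forall>b u v. phi (st v * L b u) = phi (st (L (st b) v) * u)"
    and "\<forall>b u v. gam (st v * L b u) = gam (st (L (st b) v) * u)"
    and "is_boolean_cumulants (vacuum_state sc st gam phi) B"
  shows "(length us \<ge> 2 \<longrightarrow>
            B (map (Xop sc gam phi L) us) =
              (\<Sum>\<pi>\<in>NC_ns_tilde (length us). vacuum_state sc st gam phi (W_M sc gam phi L \<pi> us)))
         \<and> (\<forall>u. B [Xop sc gam phi L u] = 0)"
proof
  have cumulant: "B (map (Xop sc gam phi L) us) =
      (\<Sum>ts\<in>irreducible_words (length us). word_value sc st gam phi L ts us)" if "us \<noteq> []" for us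
    using boolean_cumulant_Xops[OF assms(10) that] .
  show "length us \<ge> 2 \<longrightarrow> B (map (Xop sc gam phi L) us) =
      (\<Sum>\<pi>\<in>NC_ns_tilde (length us). vacuum_state sc st gam phi (W_M sc gam phi L \<pi> us))"
  proof
    assume "length us \<ge> 2"
    then have "B (map (Xop sc gam phi L) us) =
        (\<Sum>ts\<in>irreducible_words (length us). word_value sc st gam phi L ts us)"
      by (intro cumulant) auto
    also have "\<dots> = (\<Sum>\<pi>\<in>NC_ns_tilde (length us). word_value sc st gam phi L (kind_word \<pi> (length us)) us)"
      by (rule sum.reindex_bij_betw[OF bij_betw_kind_word, symmetric])
    also have "\<dots> = (\<Sum>\<pi>\<in>NC_ns_tilde (length us). vacuum_state sc st gam phi (W_M sc gam phi L \<pi> us))"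
      by (simp add: word_value_def W_M_eq_word_ops)
    finally show "B (map (Xop sc gam phi L) us) =
        (\<Sum>\<pi>\<in>NC_ns_tilde (length us). vacuum_state sc st gam phi (W_M sc gam phi L \<pi> us))" .
  qed
  have "irreducible_words 1 = {}"
    by (auto simp: irreducible_words_def dest: irreducible_length)
  then show "\<forall>u. B [Xop sc gam phi L u] = 0"
    using cumulant[of "[_]"] by simp
qed

end
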